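(* Let $n\ge3$ and $k\ge0$ be integers. Then: (1) If $S$ is a maximal reversible set in $G_n^k$, then $S$ is a maximal independent set in $G_n^k$. (2) If $n>k$ and $S$ is a maximal reversible set in $G_n^k$, then $S$ is a canonical reversible set. (3) If $S$ is a maximal reversible set in $G_n^k$ and $S$ is not a canonical reversible set, then $n\le k$ and \[|S|\le \frac{(k+1)(k+2)}{2}-\frac{n(n-1)}{2}+1.\]
   Context: For integers $n\ge3$, $k\ge0$, the crown $S_n^k$ is the poset with ground set $A\cup B$, $A=\{a_1,\dots,a_{n+k}\}$, $B=\{b_1,\dots,b_{n+k}\}$, indices cyclic modulo $n+k$; elements of $A$ are pairwise incomparable, as are elements of $B$, and $a_i$ is incomparable to $b_j$ when $j\in\{i,i+1,\dots,i+k\}$ (mod $n+k$), while $a_i<b_j$ otherwise. $\mathrm{Inc}(A,B)$ is the set of pairs $(a,b)\in A\times B$ with $a$ incomparable to $b$. The graph $G_n^k$ has vertex set $\mathrm{Inc}(A,B)$, with $(a,b)$ adjacent to $(x,y)$ iff $a<y$ and $x<b$ in $S_n^k$. A set $R\subseteq \mathrm{Inc}(A,B)$ is reversible if there is a linear extension $L$ of $S_n^k$ with $b<a$ in $L$ for all $(a,b)\in R$; a maximal reversible set is one maximal under inclusion among reversible subsets of $\mathrm{Inc}(A,B)$. A subset $X\subseteq A$ is contiguous if it is a block of cyclically consecutive elements of $A$ (the empty set and $A$ count as contiguous). A sequence $\sigma=(x_1,\dots,x_r)$ of distinct elements of $A$ is $h$-contiguous if $\{x_1,\dots,x_i\}$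 is contiguous for every $i\le r$. For such $\sigma$, $T(\sigma)$ is defined recursively: it contains every $(x_1,b)\in\mathrm{Inc}(A,B)$, and for $1\le i<r$ it contains $(x_{i+1},b)$ exactly when $(x_{i+1},b)\in\mathrm{Inc}(A,B)$ and $(x_i,b)\in T(\sigma)$. A canonical reversible set is a set of the form $T(\sigma)$ with $\sigma$ an $h$-contiguous sequence of length $k+1$. *)

theory Defs
  imports Main Complex_Main
begin

text \<open>Elements of the crown S_n^k: EA i stands for a_i, EB j for b_j, with indices
  in {0..<n+k} (cyclic modulo n+k).\<close>
datatype elt = EA nat | EB nat

definition setA :: "nat \<Rightarrow> nat \<Rightarrow> elt set" where
  "setA n k = EA ` {..<n+k}"

definition setB :: "nat \<Rightarrow> nat \<Rightarrow> elt set" where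
  "setB n k = EB ` {..<n+k}"

definition ground :: "nat \<Rightarrow> nat \<Rightarrow> elt set" where
  "ground n k = setA n k \<union> setB n k"

text \<open>Strict order of the crown: a_i < b_j iff j is not in {i,...,i+k} mod (n+k),
  i.e. iff (j - i) mod (n+k) > k.  No other strict relations.\<close>
definition crown_less :: "nat \<Rightarrow> nat \<Rightarrow> elt \<Rightarrow> elt \<Rightarrow> bool" where
  "crown_less n k x y \<longleftrightarrow>
     (\<exists>i j. x = EA i \<and> y = EB j \<and> i < n+k \<and> j < n+k \<and>
            (j + (n+k) - i) mod (n+k) > k)"

definition incomparable :: "nat \<Rightarrow> nat \<Rightarrow> elt \<Rightarrow> elt \<Rightarrow> bool" where
  "incomparable n k x y \<longleftrightarrow> \<not> crown_less n k x y \<and> \<not> crown_less n k y x"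

definition Inc :: "nat \<Rightarrow> nat \<Rightarrow> (elt \<times> elt) set" where
  "Inc n k = {(a, b). a \<in> setA n k \<and> b \<in> setB n k \<and> incomparable n k a b}"

definition adj :: "nat \<Rightarrow> nat \<Rightarrow> elt \<times> elt \<Rightarrow> elt \<times> elt \<Rightarrow> bool" where
  "adj n k u v \<longleftrightarrow> crown_less n k (fst u) (snd v) \<and> crown_less n k (fst v) (snd u)"

definition independent :: "nat \<Rightarrow> nat \<Rightarrow> (elt \<times> elt) set \<Rightarrow> bool" where
  "independent n k S \<longleftrightarrow> S \<subseteq> Inc n k \<and> (\<forall>u\<in>S. \<forall>v\<in>S. \<not> adj n k u v)"

definition maximal_independent :: "nat \<Rightarrow> nat \<Rightarrow> (elt \<times> elt) set \<Rightarrow> bool" where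
  "maximal_independent n k S \<longleftrightarrow> independent n k S \<and>
     (\<forall>S'. S \<subseteq> S' \<and> independent n k S' \<longrightarrow> S' = S)"

definition linear_extension :: "nat \<Rightarrow> nat \<Rightarrow> (elt \<times> elt) set \<Rightarrow> bool" where
  "linear_extension n k L \<longleftrightarrow>
     L \<subseteq> ground n k \<times> ground n k \<and>
     (\<forall>x. (x, x) \<notin> L) \<and> trans L \<and>
     (\<forall>x\<in>ground n k. \<forall>y\<in>ground n k. x \<noteq> y \<longrightarrow> (x, y) \<in> L \<or> (y, x) \<in> L) \<and>
     (\<forall>x y. crown_less n k x y \<longrightarrow> (x, y) \<in> L)"

definition reversible :: "nat \<Rightarrow> nat \<Rightarrow> (elt \<times> elt) set \<Rightarrow> bool" where
  "reversible n k R \<longleftrightarrow> R \<subseteq> Inc n k \<and>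
     (\<exists>L. linear_extension n k L \<and> (\<forall>(a, b)\<in>R. (b, a) \<in> L))"

definition maximal_reversible :: "nat \<Rightarrow> nat \<Rightarrow> (elt \<times> elt) set \<Rightarrow> bool" where
  "maximal_reversible n k R \<longleftrightarrow> reversible n k R \<and>
     (\<forall>R'. R \<subseteq> R' \<and> reversible n k R' \<longrightarrow> R' = R)"

definition contiguous :: "nat \<Rightarrow> nat \<Rightarrow> elt set \<Rightarrow> bool" where
  "contiguous n k X \<longleftrightarrow> X = {} \<or> X = setA n k \<or>
     (\<exists>s < n+k. \<exists>l \<le> n+k. X = {EA ((s + t) mod (n+k)) | t. t < l})"

definition h_contiguous :: "nat \<Rightarrow> nat \<Rightarrow> elt list \<Rightarrow> bool" where
  "h_contiguous n k \<sigma> \<longleftrightarrow> distinct \<sigma> \<and> set \<sigma> \<subseteq> setA n k \<and>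
     (\<forall>i \<le> length \<sigma>. contiguous n k (set (take i \<sigma>)))"

text \<open>Tcol n k \<sigma> i = set of b with (x_{i+1}, b) in T(\<sigma>) (0-based index i), following the
  recursive definition of T(\<sigma>).\<close>
fun Tcol :: "nat \<Rightarrow> nat \<Rightarrow> elt list \<Rightarrow> nat \<Rightarrow> elt set" where
  "Tcol n k \<sigma> 0 = {b. (\<sigma> ! 0, b) \<in> Inc n k}"
| "Tcol n k \<sigma> (Suc i) = {b. (\<sigma> ! Suc i, b) \<in> Inc n k \<and> b \<in> Tcol n k \<sigma> i}"

definition Tset :: "nat \<Rightarrow> nat \<Rightarrow> elt list \<Rightarrow> (elt \<times> elt) set" where
  "Tset n k \<sigma> = {(\<sigma> ! i, b) | i b. i < length \<sigma> \<and> b \<in> Tcol n k \<sigma> i}"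

definition canonical_reversible :: "nat \<Rightarrow> nat \<Rightarrow> (elt \<times> elt) set \<Rightarrow> bool" where
  "canonical_reversible n k S \<longleftrightarrow>
     (\<exists>\<sigma>. h_contiguous n k \<sigma> \<and> length \<sigma> = k + 1 \<and> S = Tset n k \<sigma>)"

end

theory Submission
  imports Defs "HOL-Library.Product_Lexorder"
begin

text \<open>
  Write \<open>R\<close> for a maximal reversible set; it consists of all incomparable pairs reversed by some
  linear extension \<open>L\<close>, so it is independent. An incomparable pair outside \<open>R\<close> and adjacent to no
  pair of \<open>R\<close> could be reversed in addition after moving one column down and one row up in
  \<open>L\<close>; hence \<open>R\<close> is a maximal independent set.

  Rank the rows (the elements of \<open>A\<close>) from the top of \<open>L\<close>. A column reversed against a row is
  incomparable to all rows ranked above it, so \<open>R\<close> is controlled by the sets \<open>C(Y\<^sub>t)\<close> of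
  columns incomparable to the \<open>t\<close> highest rows \<open>Y\<^sub>t\<close>. The rows comparable to some column of
  \<open>C(Y\<^sub>t)\<close> form a union of cyclic windows of length \<open>n - 1\<close>, disjoint from \<open>Y\<^sub>t\<close>; counting
  its runs gives \<open>|C(Y\<^sub>t)| + t \<le> k + 2\<close>, and \<open>|C(Y\<^sub>t)| + t + n \<le> k + 4\<close> if there are two
  or more runs. In the latter ("fragmented") case \<open>n \<le> k\<close>, and summing over \<open>t\<close> bounds \<open>|R|\<close>.
  Otherwise the rows compatible with \<open>C(Y\<^sub>t)\<close> form a chain of intervals of one cyclic window
  of \<open>k + 1\<close> rows; enumerating this window so that all prefixes are intervals yields an
  \<open>h\<close>-contiguous \<open>\<sigma>\<close> with \<open>R \<subseteq> T(\<sigma>)\<close>, and since \<open>T(\<sigma>)\<close> is reversible, \<open>R = T(\<sigma>)\<close>.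
\<close>

section \<open>The crown and its linear extensions\<close>

definition idx_incomparable :: "nat \<Rightarrow> nat \<Rightarrow> nat \<Rightarrow> nat \<Rightarrow> bool" where
  "idx_incomparable n k i j \<longleftrightarrow> (j + (n+k) - i) mod (n+k) \<le> k"

lemma crown_less_EB [simp]: "\<not> crown_less n k (EB j) y"
  unfolding crown_less_def by auto

lemma crown_less_EA_right [simp]: "\<not> crown_less n k x (EA i)"
  unfolding crown_less_def by auto

lemma crown_less_irrefl [simp]: "\<not> crown_less n k x x"
  unfolding crown_less_def by auto

lemma crown_less_EA_EB:
  "crown_less n k (EA i) (EB j) \<longleftrightarrow> i < n+k \<and> j < n+k \<and> \<not> idx_incomparable n k i j"
  unfolding crown_less_def idx_incomparable_def by auto

lemma crown_lessE:
  assumes "crown_less n k x y"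
  obtains i j where "x = EA i" "y = EB j" "i < n+k" "j < n+k"
  using assms unfolding crown_less_def by auto

lemma Inc_EA_EB: "(EA i, EB j) \<in> Inc n k \<longleftrightarrow> i < n+k \<and> j < n+k \<and> idx_incomparable n k i j"
  unfolding Inc_def incomparable_def setA_def setB_def idx_incomparable_def crown_less_def by auto

lemma IncE:
  assumes "(a,b) \<in> Inc n k"
  obtains i j where "a = EA i" "b = EB j" "i < n+k" "j < n+k" "idx_incomparable n k i j"
  using assms unfolding Inc_def incomparable_def setA_def setB_def idx_incomparable_def crown_less_def
  by auto

lemma Inc_intro: "a \<in> setA n k \<Longrightarrow> b \<in> setB n k \<Longrightarrow> \<not> crown_less n k a b \<Longrightarrow> (a,b) \<in> Inc n k"
  unfolding Inc_def incomparable_def setA_def setB_def by auto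

lemma setB_ground: "x \<in> setB n k \<Longrightarrow> x \<in> ground n k"
  unfolding ground_def by auto

lemma EA_ground [simp]: "EA i \<in> ground n k \<longleftrightarrow> i < n+k"
  and EB_ground [simp]: "EB j \<in> ground n k \<longleftrightarrow> j < n+k"
  unfolding ground_def setA_def setB_def by auto

lemma finite_ground: "finite (ground n k)"
  unfolding ground_def setA_def setB_def by auto

lemma linear_extensionD:
  assumes "linear_extension n k L"
  shows "L \<subseteq> ground n k \<times> ground n k" "(x,x) \<notin> L" "trans L"
    "x \<in> ground n k \<Longrightarrow> y \<in> ground n k \<Longrightarrow> x \<noteq> y \<Longrightarrow> (x,y) \<in> L \<or> (y,x) \<in> L"
    "crown_less n k x y \<Longrightarrow> (x,y) \<in> L"
  using assms unfolding linear_extension_def by blast+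

lemma linear_extension_trans:
  "linear_extension n k L \<Longrightarrow> (x,y) \<in> L \<Longrightarrow> (y,z) \<in> L \<Longrightarrow> (x,z) \<in> L"
  using linear_extensionD(3) by (meson transD)

lemma linear_extension_asym: "linear_extension n k L \<Longrightarrow> (x,y) \<in> L \<Longrightarrow> (y,x) \<notin> L"
  using linear_extensionD(2) linear_extension_trans by metis

lemma linear_extension_ex_max:
  assumes L: "linear_extension n k L" and "finite D" "D \<noteq> {}" "D \<subseteq> ground n k"
  shows "\<exists>p\<in>D. \<forall>z\<in>D. z = p \<or> (z,p) \<in> L"
  using assms(2-)
proof (induction D rule: finite_ne_induct)
  case (insert x F)
  then obtain p where p: "p \<in> F" "\<forall>z\<in>F. z = p \<or> (z,p) \<in> L" by auto
  then have "(x,p) \<in> L \<or> (p,x) \<in> L"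
    using linear_extensionD(4)[OF L] insert by blast
  then show ?case
    using p linear_extension_trans[OF L] by (metis insert_iff)
qed auto

text \<open>Remove \<open>e\<close> from the chain \<open>L\<close> and reinsert it immediately above \<open>p\<close>.\<close>
definition move_above :: "(elt \<times> elt) set \<Rightarrow> elt \<Rightarrow> elt \<Rightarrow> (elt \<times> elt) set" where
  "move_above L e p = {(x,y). (x,y) \<in> L \<and> x \<noteq> e \<and> y \<noteq> e}
      \<union> {(x,y). y = e \<and> x \<noteq> e \<and> (x = p \<or> (x,p) \<in> L)}
      \<union> {(x,y). x = e \<and> y \<noteq> e \<and> (p,y) \<in> L}"

lemma move_above_iff: "(x,y) \<in> move_above L e p \<longleftrightarrow>
   (x \<noteq> e \<and> y \<noteq> e \<and> (x,y) \<in> L) \<or> (y = e \<and> x \<noteq> e \<and> (x = p \<or> (x,p) \<in> L))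
   \<or> (x = e \<and> y \<noteq> e \<and> (p,y) \<in> L)"
  unfolding move_above_def by auto

lemma linear_extension_move_above:
  assumes L: "linear_extension n k L" and e: "e \<in> ground n k" and p: "p \<in> ground n k"
    and ep: "e \<noteq> p"
    and up: "\<And>z. crown_less n k e z \<Longrightarrow> (p,z) \<in> L"
    and down: "\<And>z. crown_less n k z e \<Longrightarrow> z = p \<or> (z,p) \<in> L"
  shows "linear_extension n k (move_above L e p)"
  unfolding linear_extension_def
proof (intro conjI allI ballI impI)
  show "move_above L e p \<subseteq> ground n k \<times> ground n k"
    using linear_extensionD(1)[OF L] e p by (auto simp: move_above_iff)
  fix x show "(x,x) \<notin> move_above L e p"
    using linear_extensionD(2)[OF L] by (auto simp: move_above_iff)
next
  show "trans (move_above L e p)"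
    using linear_extension_trans[OF L] linear_extensionD(2)[OF L] ep
    unfolding trans_def move_above_iff by metis
next
  fix x y assume "x \<in> ground n k" "y \<in> ground n k" "x \<noteq> y"
  then show "(x,y) \<in> move_above L e p \<or> (y,x) \<in> move_above L e p"
    using linear_extensionD(4)[OF L] p unfolding move_above_iff by metis
next
  fix x y assume c: "crown_less n k x y"
  then show "(x,y) \<in> move_above L e p"
    using linear_extensionD(5)[OF L c] up[of y] down[of x] unfolding move_above_iff by auto
qed

section \<open>Maximal reversible sets are maximal independent\<close>

definition reversed_by :: "nat \<Rightarrow> nat \<Rightarrow> (elt \<times> elt) set \<Rightarrow> (elt \<times> elt) set" where
  "reversed_by n k L = {(a,b). (a,b) \<in> Inc n k \<and> (b,a) \<in> L}"

lemma reversible_reversed_by: "linear_extension n k L \<Longrightarrow> reversible n k (reversed_by n k L)"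
  unfolding reversible_def reversed_by_def by auto

lemma maximal_reversible_reversed_by:
  assumes R: "maximal_reversible n k R" and L: "linear_extension n k L"
    and sub: "R \<subseteq> reversed_by n k L"
  shows "reversed_by n k L = R"
  using R sub reversible_reversed_by[OF L] unfolding maximal_reversible_def by blast

lemma maximal_reversibleE:
  assumes R: "maximal_reversible n k R"
  obtains L where "linear_extension n k L" "R = reversed_by n k L"
proof -
  from R obtain L where L: "linear_extension n k L" and "R \<subseteq> Inc n k" "\<forall>(a,b)\<in>R. (b,a) \<in> L"
    unfolding maximal_reversible_def reversible_def by blast
  then have "R \<subseteq> reversed_by n k L" unfolding reversed_by_def by auto
  then show thesis using that L maximal_reversible_reversed_by[OF R L] by simp
qed

lemma independent_reversed_by:
  assumes L: "linear_extension n k L"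
  shows "independent n k (reversed_by n k L)"
  unfolding independent_def
proof (intro conjI ballI)
  show "reversed_by n k L \<subseteq> Inc n k" unfolding reversed_by_def by auto
  fix u v assume u: "u \<in> reversed_by n k L" and v: "v \<in> reversed_by n k L"
  obtain a b x y where uv: "u = (a,b)" "v = (x,y)" by fastforce
  show "\<not> adj n k u v"
  proof
    assume "adj n k u v"
    then have "(a,y) \<in> L" "(x,b) \<in> L"
      using uv linear_extensionD(5)[OF L] unfolding adj_def by auto
    moreover have "(b,a) \<in> L" "(y,x) \<in> L" using u v uv unfolding reversed_by_def by auto
    ultimately have "(b,b) \<in> L" using linear_extension_trans[OF L] by blast
    then show False using linear_extensionD(2)[OF L] by blast
  qed
qed

lemma crown_less_next_row:
  assumes "2 \<le> n" "j < n+k"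
  shows "crown_less n k (EA ((j+1) mod (n+k))) (EB j)"
proof -
  have "(j + (n+k) - (j+1) mod (n+k)) mod (n+k) = n+k-1"
  proof (cases "j+1 < n+k")
    case False
    then have "j + 1 = n+k" using assms by auto
    then have "(j+1) mod (n+k) = 0" by simp
    then show ?thesis using \<open>j + 1 = n+k\<close> by simp
  qed simp
  then show ?thesis using assms unfolding crown_less_EA_EB idx_incomparable_def by auto
qed

lemma move_above_lower_B:
  assumes L: "linear_extension n k L" and b: "b \<in> setB n k" and pb: "crown_less n k p b"
    and pmax: "\<And>z. crown_less n k z b \<Longrightarrow> z = p \<or> (z,p) \<in> L"
  shows "linear_extension n k (move_above L b p)"
    and "reversed_by n k L \<subseteq> reversed_by n k (move_above L b p)"
proof -
  have pg: "p \<in> ground n k" using pb linear_extensionD(1,5)[OF L] by blast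
  show "linear_extension n k (move_above L b p)"
    by (rule linear_extension_move_above[OF L setB_ground[OF b] pg])
      (use pb pmax b in \<open>auto simp: setB_def\<close>)
  have pbL: "(p,b) \<in> L" using pb linear_extensionD(5)[OF L] by auto
  show "reversed_by n k L \<subseteq> reversed_by n k (move_above L b p)"
  proof
    fix u assume "u \<in> reversed_by n k L"
    then obtain x y where u: "u = (x,y)" "(x,y) \<in> Inc n k" "(y,x) \<in> L"
      unfolding reversed_by_def by auto
    have "x \<noteq> b" using u(2) b by (auto elim: IncE simp: setB_def)
    then have "(y,x) \<in> move_above L b p"
      using u(3) pbL linear_extension_trans[OF L, of p b x] unfolding move_above_iff by auto
    then show "u \<in> reversed_by n k (move_above L b p)" using u unfolding reversed_by_def by auto
  qed
qed

lemma move_above_raise_A: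
  assumes L: "linear_extension n k L" and ab: "(a,b) \<in> Inc n k" "(a,b) \<in> L"
    and above: "\<And>z. crown_less n k a z \<Longrightarrow> (b,z) \<in> L"
  shows "linear_extension n k (move_above L a b)"
    and "insert (a,b) (reversed_by n k L) \<subseteq> reversed_by n k (move_above L a b)"
proof -
  obtain i j where ij: "a = EA i" "b = EB j" "i < n+k" "j < n+k" using ab(1) by (rule IncE)
  show "linear_extension n k (move_above L a b)"
    by (rule linear_extension_move_above[OF L]) (use ij above in auto)
  show "insert (a,b) (reversed_by n k L) \<subseteq> reversed_by n k (move_above L a b)"
  proof
    fix u assume "u \<in> insert (a,b) (reversed_by n k L)"
    then consider "u = (a,b)" | x y where "u = (x,y)" "(x,y) \<in> Inc n k" "(y,x) \<in> L"
      unfolding reversed_by_def by auto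
    then show "u \<in> reversed_by n k (move_above L a b)"
    proof cases
      case 1
      then show ?thesis using ab(1) ij unfolding reversed_by_def move_above_iff by auto
    next
      case (2 x y)
      have "y \<noteq> a" using 2(2) ij by (auto elim: IncE)
      then have "(y,x) \<in> move_above L a b"
        using 2(3) ab(2) linear_extension_trans[OF L, of y a b] unfolding move_above_iff by auto
      then show ?thesis using 2 unfolding reversed_by_def by auto
    qed
  qed
qed

text \<open>Lower \<open>b\<close> to just above the highest element \<open>p\<close> below it; by maximality \<open>(a,b)\<close> is
  still not reversed, so \<open>a\<close> lies below \<open>p\<close>. If some \<open>y > a\<close> lies below \<open>p\<close> as well, the
  reversed pair \<open>(p,y)\<close> is adjacent to \<open>(a,b)\<close>; otherwise \<open>a\<close> can be raised above \<open>b\<close>, which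
  would reverse \<open>(a,b)\<close> in addition.\<close>
lemma maximal_reversible_dominating:
  assumes n: "2 \<le> n" and R: "maximal_reversible n k R" and abI: "(a,b) \<in> Inc n k"
    and abR: "(a,b) \<notin> R"
  shows "\<exists>u\<in>R. adj n k (a,b) u"
proof -
  obtain L where L: "linear_extension n k L" and RL: "R = reversed_by n k L"
    using R by (rule maximal_reversibleE)
  obtain i j where ij: "a = EA i" "b = EB j" "i < n+k" "j < n+k" using abI by (rule IncE)
  define D where "D = {z. crown_less n k z b}"
  have "D \<subseteq> ground n k" unfolding D_def by (auto elim: crown_lessE)
  moreover have "D \<noteq> {}" using crown_less_next_row[OF n ij(4)] ij unfolding D_def by auto
  ultimately obtain p where "p \<in> D" and pmax: "\<And>z. z \<in> D \<Longrightarrow> z = p \<or> (z,p) \<in> L"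
    using linear_extension_ex_max[OF L finite_subset[OF _ finite_ground]] by meson
  then have pb: "crown_less n k p b" unfolding D_def by auto
  then obtain i' where p: "p = EA i'" "i' < n+k" by (auto elim: crown_lessE)
  define L1 where "L1 = move_above L b p"
  have bB: "b \<in> setB n k" using ij unfolding setB_def by auto
  have L1: "linear_extension n k L1" and RL1: "reversed_by n k L1 = R"
    using move_above_lower_B[OF L bB pb] pmax maximal_reversible_reversed_by[OF R] RL
    unfolding L1_def D_def by auto
  have "a \<noteq> p" using pb abI unfolding Inc_def incomparable_def by auto
  have ap: "(a,p) \<in> L"
  proof (rule ccontr)
    assume "(a,p) \<notin> L"
    then have "(p,a) \<in> L" using linear_extensionD(4)[OF L, of a p] ij p \<open>a \<noteq> p\<close> by auto
    then have "(b,a) \<in> L1" using ij p unfolding L1_def move_above_iff by auto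
    then show False using abR abI RL1 unfolding reversed_by_def by auto
  qed
  show ?thesis
  proof (cases "\<exists>y. crown_less n k a y \<and> (y,p) \<in> L")
    case True
    then obtain y where y: "crown_less n k a y" "(y,p) \<in> L" by auto
    then obtain j' where y': "y = EB j'" "j' < n+k" by (auto elim: crown_lessE)
    have "\<not> crown_less n k p y"
      using y(2) linear_extensionD(5)[OF L] linear_extension_asym[OF L] by blast
    then have "(p,y) \<in> Inc n k" using p y' by (intro Inc_intro) (auto simp: setA_def setB_def)
    then have "(p,y) \<in> R" using y(2) RL unfolding reversed_by_def by auto
    moreover have "adj n k (a,b) (p,y)" unfolding adj_def using y(1) pb by auto
    ultimately show ?thesis by blast
  next
    case False
    have "(b,z) \<in> L1" if z: "crown_less n k a z" for z
    proof -
      obtain j' where z': "z = EB j'" "j' < n+k" using z by (auto elim: crown_lessE)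
      then have "(p,z) \<in> L" using False z linear_extensionD(4)[OF L, of p z] p by auto
      moreover have "z \<noteq> b" using z abI unfolding Inc_def incomparable_def by auto
      ultimately show ?thesis using z' ij unfolding L1_def move_above_iff by auto
    qed
    moreover have "(a,b) \<in> L1" using ap \<open>a \<noteq> p\<close> ij unfolding L1_def move_above_iff by auto
    ultimately have "linear_extension n k (move_above L1 a b)"
      and "insert (a,b) R \<subseteq> reversed_by n k (move_above L1 a b)"
      using move_above_raise_A[OF L1 abI] RL1 by auto
    then show ?thesis using maximal_reversible_reversed_by[OF R] abR by blast
  qed
qed

theorem maximal_reversible_imp_maximal_independent:
  assumes n: "2 \<le> n" and R: "maximal_reversible n k R"
  shows "maximal_independent n k R"
proof -
  obtain L where L: "linear_extension n k L" and RL: "R = reversed_by n k L"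
    using R by (rule maximal_reversibleE)
  have "S = R" if RS: "R \<subseteq> S" and S: "independent n k S" for S
  proof (rule ccontr)
    assume "S \<noteq> R"
    then obtain a b where ab: "(a,b) \<in> S" "(a,b) \<notin> R" using RS by auto
    moreover have "(a,b) \<in> Inc n k" using ab S unfolding independent_def by auto
    ultimately obtain u where "u \<in> R" "adj n k (a,b) u"
      using maximal_reversible_dominating[OF n R] by blast
    then show False using S RS ab(1) unfolding independent_def by blast
  qed
  then show ?thesis
    unfolding maximal_independent_def using independent_reversed_by[OF L] RL by blast
qed

section \<open>Cyclic runs\<close>

lemma mod_add_cyc_dist:
  fixes N i j :: nat
  assumes "i < N" "j < N" shows "(i + (j + N - i) mod N) mod N = j"
proof (cases "i \<le> j")
  case True
  then have "(j + N - i) mod N = ((j - i) + N) mod N" by (simp add: add.commute)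
  also have "\<dots> = j - i" using assms by simp
  finally show ?thesis using True assms by simp
next
  case False
  then have "(j + N - i) mod N = j + N - i" using assms by simp
  moreover have "i + (j + N - i) = j + N" using False assms by linarith
  ultimately show ?thesis using assms by simp
qed

lemma cyc_dist_add:
  fixes N i t :: nat
  assumes "i < N" "t < N" shows "((i+t) mod N + N - i) mod N = t"
proof (cases "i + t < N")
  case False
  then have "(i+t) mod N = i + t - N" using assms by (simp add: le_mod_geq)
  then show ?thesis using False assms by simp
qed (use assms in simp)

lemma cyc_dist_sub:
  fixes N j t :: nat
  assumes "j < N" "1 \<le> t" "t < N" shows "(j + N - (j+t) mod N) mod N = N - t"
proof (cases "j + t < N")
  case False
  then have "(j+t) mod N = j + t - N" using assms by (simp add: le_mod_geq)
  then have "j + N - (j+t) mod N = (N - t) + N" using False assms by simp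
  moreover have "((N - t) + N) mod N = N - t" using assms by (simp only: mod_add_self2) simp
  ultimately show ?thesis by simp
qed (use assms in simp)

lemma add_mod_cancel_left:
  fixes N i s t :: nat
  assumes "i < N" "s < N" "t < N" "(i+s) mod N = (i+t) mod N" shows "s = t"
  using cyc_dist_add[OF assms(1,2)] cyc_dist_add[OF assms(1,3)] assms(4) by metis

lemma add_mod_sub_cancel:
  fixes N i d :: nat
  assumes "i < N" "d \<le> N" shows "((i + d) mod N + (N - d)) mod N = i"
proof -
  have "((i + d) mod N + (N - d)) mod N = (i + d + (N - d)) mod N" by (simp add: mod_add_left_eq)
  also have "i + d + (N - d) = i + N" using assms by simp
  finally show ?thesis using assms by simp
qed

abbreviation cyc_succ :: "nat \<Rightarrow> nat \<Rightarrow> nat" where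
  "cyc_succ N x \<equiv> (x+1) mod N"

text \<open>The last elements of the maximal runs of \<open>X \<subseteq> {..<N}\<close> on the cycle \<open>\<int>/N\<close>; their
  number counts the runs, unless \<open>X\<close> is the whole cycle.\<close>
definition run_ends :: "nat \<Rightarrow> nat set \<Rightarrow> nat set" where
  "run_ends N X = {x\<in>X. cyc_succ N x \<notin> X}"

definition cyc_window :: "nat \<Rightarrow> nat set \<Rightarrow> nat \<Rightarrow> nat set" where
  "cyc_window N C m = {(j + t) mod N | j t. j \<in> C \<and> 1 \<le> t \<and> t \<le> m}"

lemma finite_run_ends: "finite X \<Longrightarrow> finite (run_ends N X)"
  unfolding run_ends_def by simp

lemma inj_on_cyc_succ: "inj_on (cyc_succ N) {..<N}"
proof (rule inj_onI)
  fix x y assume x: "x \<in> {..<N}" and y: "y \<in> {..<N}" and e: "(x+1) mod N = (y+1) mod N"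
  consider "x + 1 < N" "y + 1 < N" | "x + 1 = N" "y + 1 < N" | "x + 1 < N" "y + 1 = N"
    | "x + 1 = N" "y + 1 = N"
    using x y by fastforce
  then show "x = y"
    by cases (use e in auto)
qed

lemma cyc_window_subset: "0 < N \<Longrightarrow> cyc_window N C m \<subseteq> {..<N}"
  unfolding cyc_window_def by auto

lemma cyc_window_1: "cyc_window N C 1 = cyc_succ N ` C"
  unfolding cyc_window_def by force

lemma cyc_window_Suc:
  assumes "1 \<le> m"
  shows "cyc_window N C (Suc m) = cyc_window N C m \<union> cyc_succ N ` cyc_window N C m"
proof
  show "cyc_window N C (Suc m) \<subseteq> cyc_window N C m \<union> cyc_succ N ` cyc_window N C m"
  proof
    fix x assume "x \<in> cyc_window N C (Suc m)"
    then obtain j t where x: "x = (j+t) mod N" "j \<in> C" "1 \<le> t" "t \<le> Suc m"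
      unfolding cyc_window_def by auto
    show "x \<in> cyc_window N C m \<union> cyc_succ N ` cyc_window N C m"
    proof (cases "t \<le> m")
      case False
      then have "t = Suc m" using x by auto
      then have "x = cyc_succ N ((j+m) mod N)" using x by (simp add: mod_Suc_eq)
      moreover have "(j + m) mod N \<in> cyc_window N C m" using x assms unfolding cyc_window_def by auto
      ultimately show ?thesis by auto
    qed (use x in \<open>auto simp: cyc_window_def\<close>)
  qed
next
  show "cyc_window N C m \<union> cyc_succ N ` cyc_window N C m \<subseteq> cyc_window N C (Suc m)"
  proof
    fix x assume "x \<in> cyc_window N C m \<union> cyc_succ N ` cyc_window N C m"
    then consider "x \<in> cyc_window N C m"
      | j t where "x = cyc_succ N ((j+t) mod N)" "j \<in> C" "1 \<le> t" "t \<le> m"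
      unfolding cyc_window_def by auto
    then show "x \<in> cyc_window N C (Suc m)"
    proof cases
      case (2 j t)
      then have "x = (j + Suc t) mod N" by (simp add: mod_Suc_eq)
      then show ?thesis using 2 unfolding cyc_window_def by fastforce
    qed (fastforce simp: cyc_window_def)
  qed
qed

lemma card_Un_cyc_succ:
  assumes X: "X \<subseteq> {..<N}"
  shows "card (X \<union> cyc_succ N ` X) = card X + card (run_ends N X)"
proof -
  have fin: "finite X" using X finite_subset by blast
  have eq: "cyc_succ N ` X - X = cyc_succ N ` run_ends N X" unfolding run_ends_def by auto
  have "card (X \<union> cyc_succ N ` X) = card (X \<union> (cyc_succ N ` X - X))" by (metis Un_Diff_cancel)
  also have "\<dots> = card X + card (cyc_succ N ` X - X)"
    using fin by (intro card_Un_disjoint) auto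
  also have "card (cyc_succ N ` X - X) = card (run_ends N X)"
    unfolding eq using inj_on_cyc_succ X unfolding run_ends_def
    by (intro card_image) (auto intro: inj_on_subset)
  finally show ?thesis .
qed

lemma card_run_ends_Un_cyc_succ:
  assumes X: "X \<subseteq> {..<N}"
  shows "card (run_ends N (X \<union> cyc_succ N ` X)) \<le> card (run_ends N X)"
proof -
  have "run_ends N (X \<union> cyc_succ N ` X) \<subseteq> cyc_succ N ` run_ends N X"
    unfolding run_ends_def by auto
  then have "card (run_ends N (X \<union> cyc_succ N ` X)) \<le> card (cyc_succ N ` run_ends N X)"
    using X finite_subset by (intro card_mono finite_imageI finite_run_ends) auto
  also have "\<dots> \<le> card (run_ends N X)"
    using X by (intro card_image_le finite_run_ends) (auto intro: finite_subset)
  finally show ?thesis .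
qed

text \<open>Each widening of the windows by one step adds one element per run, and never increases the
  number of runs.\<close>
lemma card_cyc_window:
  assumes C: "C \<subseteq> {..<N}" and N: "0 < N" and m: "1 \<le> m"
  shows "card C + (m-1) * card (run_ends N (cyc_window N C m)) \<le> card (cyc_window N C m)"
  using m
proof (induction m rule: dec_induct)
  case base
  have "card (cyc_window N C 1) = card C"
    unfolding cyc_window_1 using inj_on_cyc_succ C by (intro card_image) (auto intro: inj_on_subset)
  then show ?case by simp
next
  case (step m)
  let ?X = "cyc_window N C m"
  have X: "?X \<subseteq> {..<N}" using cyc_window_subset N by auto
  have "card (cyc_window N C (Suc m)) = card ?X + card (run_ends N ?X)"
    unfolding cyc_window_Suc[OF step(1)] using card_Un_cyc_succ[OF X] .
  moreover have "card (run_ends N (cyc_window N C (Suc m))) \<le> card (run_ends N ?X)"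
    unfolding cyc_window_Suc[OF step(1)] using card_run_ends_Un_cyc_succ[OF X] .
  moreover note mult_le_mono2[OF this, of "m-1"]
  ultimately have "card C + (m-1) * card (run_ends N (cyc_window N C (Suc m)))
      + card (run_ends N (cyc_window N C (Suc m))) \<le> card (cyc_window N C (Suc m))"
    using step(3) by linarith
  moreover have "(m-1) * e + e = (Suc m - 1) * e" for e
    using step(1) by (cases m) auto
  ultimately show ?case by (metis add.assoc)
qed

lemma run_ends_empty:
  assumes X: "X \<subseteq> {..<N}" and E: "run_ends N X = {}" and x: "x \<in> X"
  shows "X = {..<N}"
proof -
  have all: "(x + t) mod N \<in> X" for t
  proof (induction t)
    case 0 then show ?case using x X by auto
  next
    case (Suc t)
    then have "((x+t) mod N + 1) mod N \<in> X" using E unfolding run_ends_def by auto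
    then show ?case by (simp add: mod_Suc_eq)
  qed
  have "y \<in> X" if "y < N" for y
    using all[of "(y + N - x) mod N"] mod_add_cyc_dist[of x N y] x X that by auto
  then show ?thesis using X by auto
qed

lemma ex_run_end_before:
  assumes "x \<in> X" "(x + d) mod N \<notin> X" "x < N"
  shows "\<exists>d'<d. (x + d') mod N \<in> run_ends N X"
  using assms(2)
proof (induction d)
  case (Suc d)
  show ?case
  proof (cases "(x + d) mod N \<in> X")
    case True
    then have "(x+d) mod N \<in> run_ends N X" using Suc.prems unfolding run_ends_def by (simp add: mod_Suc_eq)
    then show ?thesis by auto
  qed (use Suc.IH less_Suc_eq in blast)
qed (use assms in auto)

text \<open>Read from position \<open>s\<close>: if \<open>X\<close> contains position \<open>-1\<close> and \<open>u\<^sub>2\<close> but not \<open>u\<^sub>1 < u\<^sub>2\<close> nor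
  \<open>u\<^sub>3 > u\<^sub>2\<close>, then one run ends in \<open>[u\<^sub>2, u\<^sub>3)\<close> and another one in \<open>{-1} \<union> [0, u\<^sub>1)\<close>.\<close>
lemma two_run_ends:
  fixes N s u1 u2 u3 :: nat
  defines "pos v \<equiv> (s + v) mod N"
  assumes s: "s < N" and u: "u1 < u2" "u2 < u3" "u3 < N - 1" and fin: "finite X"
    and X: "pos (N-1) \<in> X" "pos u1 \<notin> X" "pos u2 \<in> X" "pos u3 \<notin> X"
  shows "2 \<le> card (run_ends N X)"
proof -
  have pos_add: "(pos a + b) mod N = pos (a + b)" for a b
    unfolding pos_def by (simp add: mod_add_left_eq add.assoc)
  have pos_lt: "pos a < N" for a unfolding pos_def using s by simp
  have pos_inj: "a = b" if "a < N" "b < N" "pos a = pos b" for a b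
    using add_mod_cancel_left[OF s that(1,2)] that(3) unfolding pos_def by blast
  have "(pos u2 + (u3 - u2)) mod N \<notin> X" unfolding pos_add using u X(4) by simp
  then obtain d1 where d1: "d1 < u3 - u2" "pos (u2 + d1) \<in> run_ends N X"
    using ex_run_end_before[OF X(3) _ pos_lt] unfolding pos_add by blast
  have "s + (N - 1 + (u1 + 1)) = (s + u1) + N" using u by simp
  then have "pos (N - 1 + (u1 + 1)) = pos u1" unfolding pos_def by (simp only: mod_add_self2)
  then have "(pos (N-1) + (u1 + 1)) mod N \<notin> X" unfolding pos_add using X(2) by simp
  then obtain d2 where d2: "d2 < u1 + 1" "pos (N - 1 + d2) \<in> run_ends N X"
    using ex_run_end_before[OF X(1) _ pos_lt] unfolding pos_add by blast
  have "pos (N - 1 + d2) = pos ((N - 1 + d2) mod N)" unfolding pos_def by (simp add: mod_add_right_eq)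
  moreover have "(N - 1 + d2) mod N \<noteq> u2 + d1"
  proof (cases d2)
    case (Suc d)
    then have "N - 1 + d2 = d + N" using u by simp
    then have "(N - 1 + d2) mod N = d" using u d2 Suc by simp
    then show ?thesis using Suc d2 u by simp
  qed (use u d1 in simp)
  ultimately have "pos (u2 + d1) \<noteq> pos (N - 1 + d2)"
    using pos_inj[of "u2 + d1" "(N - 1 + d2) mod N"] u d1 s by force
  then have "card {pos (u2 + d1), pos (N - 1 + d2)} = 2" by simp
  moreover have "{pos (u2 + d1), pos (N - 1 + d2)} \<subseteq> run_ends N X" using d1 d2 by auto
  ultimately show ?thesis using card_mono[OF finite_run_ends[OF fin]] by metis
qed

section \<open>Columns incomparable to a set of rows\<close>

lemma not_idx_incomparable_iff:
  assumes i: "i < n+k" and j: "j < n+k"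
  shows "\<not> idx_incomparable n k i j \<longleftrightarrow> (\<exists>t. 1 \<le> t \<and> t \<le> n-1 \<and> i = (j+t) mod (n+k))"
proof
  assume "\<not> idx_incomparable n k i j"
  moreover define d where "d = (j + (n+k) - i) mod (n+k)"
  moreover have "0 < n+k" using j by linarith
  ultimately have d: "k < d" "d < n+k" unfolding idx_incomparable_def by auto
  have "(j + (n+k-d)) mod (n+k) = i"
    using add_mod_sub_cancel[OF i, of d] mod_add_cyc_dist[OF i j] d unfolding d_def by simp
  then show "\<exists>t. 1 \<le> t \<and> t \<le> n-1 \<and> i = (j+t) mod (n+k)"
    using d by (intro exI[of _ "n+k-d"]) auto
next
  assume "\<exists>t. 1 \<le> t \<and> t \<le> n-1 \<and> i = (j+t) mod (n+k)"
  then obtain t where t: "1 \<le> t" "t \<le> n-1" "i = (j+t) mod (n+k)" by auto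
  then have "(j + (n+k) - i) mod (n+k) = n+k - t" using cyc_dist_sub[OF j t(1)] by simp
  then show "\<not> idx_incomparable n k i j" unfolding idx_incomparable_def using t by linarith
qed

lemma idx_incomparable_add:
  assumes "0 < n" "x < n+k" "t \<le> k" shows "idx_incomparable n k x ((x+t) mod (n+k))"
  using cyc_dist_add[of x "n+k" t] assms unfolding idx_incomparable_def by simp

definition common_inc :: "nat \<Rightarrow> nat \<Rightarrow> nat set \<Rightarrow> nat set" where
  "common_inc n k Y = {j. j < n+k \<and> (\<forall>i\<in>Y. idx_incomparable n k i j)}"

definition blocked :: "nat \<Rightarrow> nat \<Rightarrow> nat set \<Rightarrow> nat set" where
  "blocked n k Y = {i. i < n+k \<and> (\<exists>j\<in>common_inc n k Y. \<not> idx_incomparable n k i j)}"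

definition compatible :: "nat \<Rightarrow> nat \<Rightarrow> nat set \<Rightarrow> nat set" where
  "compatible n k Y = {i. i < n+k \<and> (\<forall>j\<in>common_inc n k Y. idx_incomparable n k i j)}"

definition fragmented :: "nat \<Rightarrow> nat \<Rightarrow> nat set \<Rightarrow> bool" where
  "fragmented n k Y \<longleftrightarrow> common_inc n k Y \<noteq> {} \<and> 2 \<le> card (run_ends (n+k) (blocked n k Y))"

lemma common_inc_subset: "common_inc n k Y \<subseteq> {..<n+k}"
  and blocked_subset: "blocked n k Y \<subseteq> {..<n+k}"
  unfolding common_inc_def blocked_def by auto

lemma finite_common_inc: "finite (common_inc n k Y)"
  and finite_blocked: "finite (blocked n k Y)"
  using finite_subset[OF common_inc_subset] finite_subset[OF blocked_subset] by auto

lemma common_inc_antimono: "Y \<subseteq> Y' \<Longrightarrow> common_inc n k Y' \<subseteq> common_inc n k Y"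
  unfolding common_inc_def by auto

lemma compatible_eq: "compatible n k Y = {..<n+k} - blocked n k Y"
  unfolding compatible_def blocked_def by auto

lemma subset_compatible: "Y \<subseteq> {..<n+k} \<Longrightarrow> Y \<subseteq> compatible n k Y"
  unfolding compatible_def common_inc_def by auto

lemma compatible_antimono: "common_inc n k Y' \<subseteq> common_inc n k Y \<Longrightarrow> compatible n k Y \<subseteq> compatible n k Y'"
  unfolding compatible_def by auto

lemma compatible_idx_incomparable:
  "i \<in> compatible n k Y \<Longrightarrow> j \<in> common_inc n k Y \<Longrightarrow> idx_incomparable n k i j"
  unfolding compatible_def by auto

lemma fragmented_cong: "common_inc n k Y = common_inc n k Y' \<Longrightarrow> fragmented n k Y = fragmented n k Y'"
  unfolding fragmented_def blocked_def by simp

lemma blocked_eq_cyc_window: "blocked n k Y = cyc_window (n+k) (common_inc n k Y) (n-1)"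
proof
  show "blocked n k Y \<subseteq> cyc_window (n+k) (common_inc n k Y) (n-1)"
  proof
    fix i assume "i \<in> blocked n k Y"
    then obtain j where i: "i < n+k" "j \<in> common_inc n k Y" "\<not> idx_incomparable n k i j"
      unfolding blocked_def by auto
    then show "i \<in> cyc_window (n+k) (common_inc n k Y) (n-1)"
      using not_idx_incomparable_iff[OF i(1)] common_inc_subset unfolding cyc_window_def by blast
  qed
next
  show "cyc_window (n+k) (common_inc n k Y) (n-1) \<subseteq> blocked n k Y"
  proof
    fix i assume "i \<in> cyc_window (n+k) (common_inc n k Y) (n-1)"
    then obtain j t where it: "i = (j+t) mod (n+k)" "j \<in> common_inc n k Y" "1 \<le> t" "t \<le> n-1"
      unfolding cyc_window_def by auto
    moreover have "j < n+k" using it(2) common_inc_subset by auto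
    moreover from this have "i < n+k" using it(1) mod_less_divisor[of "n+k" "j+t"] by linarith
    ultimately show "i \<in> blocked n k Y"
      using not_idx_incomparable_iff unfolding blocked_def by blast
  qed
qed

context
  fixes n k :: nat
  assumes n2: "2 \<le> n"
begin

lemma card_blocked:
  "card (common_inc n k Y) + (n-2) * card (run_ends (n+k) (blocked n k Y)) \<le> card (blocked n k Y)"
  using card_cyc_window[OF common_inc_subset, of n k "n-1" Y] n2
  unfolding blocked_eq_cyc_window by (simp add: numeral_2_eq_2)

lemma blocked_nonempty: "common_inc n k Y \<noteq> {} \<Longrightarrow> blocked n k Y \<noteq> {}"
  unfolding blocked_eq_cyc_window cyc_window_def using n2 by fastforce

lemma card_blocked_add:
  assumes Y: "Y \<subseteq> {..<n+k}"
  shows "card (blocked n k Y) + card Y \<le> n+k"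
proof -
  have "blocked n k Y \<inter> Y = {}" using Y unfolding blocked_def common_inc_def by auto
  then have "card (blocked n k Y \<union> Y) = card (blocked n k Y) + card Y"
    using finite_blocked finite_subset[OF Y] by (intro card_Un_disjoint) auto
  moreover have "card (blocked n k Y \<union> Y) \<le> card {..<n+k}"
    using blocked_subset Y by (intro card_mono) auto
  ultimately show ?thesis by simp
qed

lemma card_common_inc_le:
  assumes Y: "Y \<subseteq> {..<n+k}" "Y \<noteq> {}" and C: "common_inc n k Y \<noteq> {}"
  shows "card (common_inc n k Y) + card Y \<le> k+2"
proof -
  have "run_ends (n+k) (blocked n k Y) \<noteq> {}"
  proof
    assume "run_ends (n+k) (blocked n k Y) = {}"
    then have "blocked n k Y = {..<n+k}"
      using run_ends_empty[OF blocked_subset] blocked_nonempty[OF C] by blast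
    then show False using Y card_blocked_add[OF Y(1)] finite_subset[OF Y(1)] by simp
  qed
  then have "1 \<le> card (run_ends (n+k) (blocked n k Y))"
    using finite_run_ends[OF finite_blocked] by (simp add: Suc_le_eq card_gt_0_iff)
  then have "n-2 \<le> (n-2) * card (run_ends (n+k) (blocked n k Y))" by simp
  then show ?thesis using card_blocked[of Y] card_blocked_add[OF Y(1)] n2 by linarith
qed

end

lemma fragmented_card_bounds:
  assumes n3: "3 \<le> n" and Y: "Y \<subseteq> {..<n+k}" and F: "fragmented n k Y"
  shows "card (common_inc n k Y) + card Y + n \<le> k+4" "2 \<le> card (common_inc n k Y)"
proof -
  have n2: "2 \<le> n" using n3 by simp
  have C: "common_inc n k Y \<noteq> {}" and E: "2 \<le> card (run_ends (n+k) (blocked n k Y))"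
    using F unfolding fragmented_def by auto
  have "(n-2) * 2 \<le> (n-2) * card (run_ends (n+k) (blocked n k Y))" using E by (rule mult_le_mono2)
  then have U: "card (common_inc n k Y) + 2*(n-2) \<le> card (blocked n k Y)"
    using card_blocked[OF n2, of k Y] by linarith
  then show "card (common_inc n k Y) + card Y + n \<le> k+4" using card_blocked_add[OF n2 Y] n3 by linarith
  show "2 \<le> card (common_inc n k Y)"
  proof (rule ccontr)
    assume "\<not> 2 \<le> card (common_inc n k Y)"
    moreover have "card (common_inc n k Y) \<noteq> 0" using C finite_common_inc by auto
    ultimately have "card (common_inc n k Y) = 1" by linarith
    then obtain j where j: "common_inc n k Y = {j}" by (rule card_1_singletonE)
    have "blocked n k Y = (\<lambda>t. (j+t) mod (n+k)) ` {1..n-1}"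
      unfolding blocked_eq_cyc_window j cyc_window_def by auto
    then have "card (blocked n k Y) \<le> n-1" using card_image_le[of "{1..n-1}"] by auto
    then show False using U j n3 by simp
  qed
qed

lemma card_common_inc_singleton:
  assumes "0 < n" "x < n+k" shows "k+1 \<le> card (common_inc n k {x})"
proof -
  have "(\<lambda>t. (x+t) mod (n+k)) ` {..k} \<subseteq> common_inc n k {x}"
    using idx_incomparable_add[OF assms] assms unfolding common_inc_def by auto
  moreover have "inj_on (\<lambda>t. (x+t) mod (n+k)) {..k}"
  proof (rule inj_onI)
    fix s t assume "s \<in> {..k}" "t \<in> {..k}" "(x+s) mod (n+k) = (x+t) mod (n+k)"
    moreover have "s < n+k" "t < n+k" using calculation assms(1) by auto
    ultimately show "s = t" using add_mod_cancel_left[OF assms(2)] by blast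
  qed
  ultimately have "card {..k} \<le> card (common_inc n k {x})"
    using finite_common_inc by (metis card_image card_mono)
  then show ?thesis by simp
qed

lemma not_fragmented_singleton:
  assumes "3 \<le> n" "x < n+k" shows "\<not> fragmented n k {x}"
proof
  assume "fragmented n k {x}"
  then have "card (common_inc n k {x}) + 1 + n \<le> k+4"
    using fragmented_card_bounds(1)[OF assms(1), of "{x}"] assms(2) by auto
  then show False using card_common_inc_singleton[of n x k] assms by simp
qed

section \<open>Reversed pairs are governed by the ranks of the rows\<close>

definition rank_prefix :: "nat \<Rightarrow> (nat \<Rightarrow> nat) \<Rightarrow> nat \<Rightarrow> nat set" where
  "rank_prefix N r t = {x. x < N \<and> r x < t}"

definition rank_pairs :: "nat \<Rightarrow> nat \<Rightarrow> (nat \<Rightarrow> nat) \<Rightarrow> (elt \<times> elt) set" where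
  "rank_pairs n k r =
     {(EA x, EB j) | x j. x < n+k \<and> j \<in> common_inc n k (rank_prefix (n+k) r (Suc (r x)))}"

definition row_rank :: "nat \<Rightarrow> nat \<Rightarrow> (elt \<times> elt) set \<Rightarrow> nat \<Rightarrow> nat" where
  "row_rank n k L x = card {x'. x' < n+k \<and> (EA x, EA x') \<in> L}"

lemma rank_prefix_subset: "rank_prefix N r t \<subseteq> {..<N}"
  unfolding rank_prefix_def by auto

lemma rank_prefix_mono: "t \<le> t' \<Longrightarrow> rank_prefix N r t \<subseteq> rank_prefix N r t'"
  unfolding rank_prefix_def by auto

lemma card_rank_prefix:
  assumes r: "bij_betw r {..<N} {..<N}" and t: "t \<le> N"
  shows "card (rank_prefix N r t) = t"
proof -
  have inj: "inj_on r (rank_prefix N r t)"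
    using r rank_prefix_subset unfolding bij_betw_def by (meson inj_on_subset)
  have "r ` rank_prefix N r t = {..<t}"
  proof
    show "{..<t} \<subseteq> r ` rank_prefix N r t"
    proof
      fix y assume y: "y \<in> {..<t}"
      then have "y \<in> r ` {..<N}" using r t unfolding bij_betw_def by auto
      then show "y \<in> r ` rank_prefix N r t" using y unfolding rank_prefix_def by auto
    qed
  qed (auto simp: rank_prefix_def)
  then show ?thesis using card_image[OF inj] by simp
qed

lemma finite_rank_pairs: "finite (rank_pairs n k r)"
proof -
  have "rank_pairs n k r \<subseteq> (EA ` {..<n+k}) \<times> (EB ` {..<n+k})"
    unfolding rank_pairs_def using common_inc_subset[of n k] by blast
  then show ?thesis by (rule finite_subset) auto
qed

lemma card_rank_pairs:
  assumes r: "bij_betw r {..<n+k} {..<n+k}"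
  shows "card (rank_pairs n k r) = (\<Sum>t\<in>{1..n+k}. card (common_inc n k (rank_prefix (n+k) r t)))"
proof -
  define f where "f = (\<lambda>(x,j). (EA x, EB j))"
  have "rank_pairs n k r = f ` (SIGMA x:{..<n+k}. common_inc n k (rank_prefix (n+k) r (Suc (r x))))"
    unfolding rank_pairs_def f_def by auto
  moreover have "inj f" unfolding f_def inj_def by auto
  ultimately have "card (rank_pairs n k r)
      = card (SIGMA x:{..<n+k}. common_inc n k (rank_prefix (n+k) r (Suc (r x))))"
    by (simp add: card_image inj_on_subset)
  also have "\<dots> = (\<Sum>x<n+k. card (common_inc n k (rank_prefix (n+k) r (Suc (r x)))))"
    by (rule card_SigmaI) (auto simp: finite_common_inc)
  also have "\<dots> = (\<Sum>t<n+k. card (common_inc n k (rank_prefix (n+k) r (Suc t))))"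
    using sum.reindex_bij_betw[OF r, of "\<lambda>t. card (common_inc n k (rank_prefix (n+k) r (Suc t)))"]
    by simp
  also have "\<dots> = (\<Sum>t\<in>{1..n+k}. card (common_inc n k (rank_prefix (n+k) r t)))"
    by (rule sum.reindex_bij_witness[of _ "\<lambda>t. t - 1" Suc]) auto
  finally show ?thesis .
qed

lemma row_rank_less:
  assumes L: "linear_extension n k L" and xy: "(EA x, EA y) \<in> L" and y: "y < n+k"
  shows "row_rank n k L y < row_rank n k L x"
  unfolding row_rank_def
proof (rule psubset_card_mono)
  show "{x'. x' < n+k \<and> (EA y, EA x') \<in> L} \<subset> {x'. x' < n+k \<and> (EA x, EA x') \<in> L}"
  proof
    show "{x'. x' < n+k \<and> (EA y, EA x') \<in> L} \<subseteq> {x'. x' < n+k \<and> (EA x, EA x') \<in> L}"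
      using linear_extension_trans[OF L xy] by auto
    have "(EA y, EA y) \<notin> L" using linear_extensionD(2)[OF L] by auto
    then show "{x'. x' < n+k \<and> (EA y, EA x') \<in> L} \<noteq> {x'. x' < n+k \<and> (EA x, EA x') \<in> L}"
      using xy y by blast
  qed
qed auto

lemma bij_betw_row_rank:
  assumes L: "linear_extension n k L"
  shows "bij_betw (row_rank n k L) {..<n+k} {..<n+k}"
proof -
  have into: "row_rank n k L ` {..<n+k} \<subseteq> {..<n+k}"
  proof
    fix y assume "y \<in> row_rank n k L ` {..<n+k}"
    then obtain x where x: "x < n+k" "y = row_rank n k L x" by auto
    have "{x'. x' < n+k \<and> (EA x, EA x') \<in> L} \<subseteq> {..<n+k} - {x}"
      using linear_extensionD(2)[OF L] by auto
    then have "y \<le> card ({..<n+k} - {x})" unfolding x(2) row_rank_def by (intro card_mono) auto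
    then show "y \<in> {..<n+k}" using x by auto
  qed
  have inj: "inj_on (row_rank n k L) {..<n+k}"
  proof (rule inj_onI)
    fix x y assume x: "x \<in> {..<n+k}" and y: "y \<in> {..<n+k}"
      and e: "row_rank n k L x = row_rank n k L y"
    show "x = y"
    proof (rule ccontr)
      assume "x \<noteq> y"
      then have "(EA x, EA y) \<in> L \<or> (EA y, EA x) \<in> L" using linear_extensionD(4)[OF L] x y by auto
      then show False using row_rank_less[OF L] x y e by (metis lessThan_iff less_irrefl)
    qed
  qed
  have "row_rank n k L ` {..<n+k} = {..<n+k}" using endo_inj_surj[OF _ into inj] by simp
  then show ?thesis using inj unfolding bij_betw_def by simp
qed

text \<open>If \<open>b\<^sub>j\<close> lies below \<open>a\<^sub>x\<close> in \<open>L\<close>, it lies below every row above \<open>a\<^sub>x\<close>, so it is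
  incomparable to all of them.\<close>
lemma reversed_by_subset_rank_pairs:
  assumes L: "linear_extension n k L"
  shows "reversed_by n k L \<subseteq> rank_pairs n k (row_rank n k L)"
proof
  fix p assume "p \<in> reversed_by n k L"
  then obtain x j where p: "p = (EA x, EB j)" "(EB j, EA x) \<in> L"
    and xj: "x < n+k" "j < n+k" "idx_incomparable n k x j"
    unfolding reversed_by_def by (auto elim: IncE)
  have "idx_incomparable n k x' j"
    if x': "x' < n+k" "row_rank n k L x' < Suc (row_rank n k L x)" for x'
  proof (cases "x' = x")
    case False
    have "(EA x', EA x) \<notin> L" using row_rank_less[OF L, of x' x] x' xj by auto
    then have "(EA x, EA x') \<in> L" using linear_extensionD(4)[OF L, of "EA x" "EA x'"] x' xj False by auto
    then have "(EB j, EA x') \<in> L" using p(2) linear_extension_trans[OF L] by blast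
    then have "\<not> crown_less n k (EA x') (EB j)"
      using linear_extensionD(5)[OF L] linear_extension_asym[OF L] by blast
    then show ?thesis using x' xj unfolding crown_less_EA_EB by auto
  qed (use xj in simp)
  then have "j \<in> common_inc n k (rank_prefix (n+k) (row_rank n k L) (Suc (row_rank n k L x)))"
    unfolding common_inc_def rank_prefix_def using xj by auto
  then show "p \<in> rank_pairs n k (row_rank n k L)" unfolding rank_pairs_def p using xj by auto
qed

section \<open>The fragmented case\<close>

lemma double_sum_countdown: "2 * (\<Sum>s<m. m - s) = m * (m + 1::nat)"
proof (induction m)
  case (Suc m)
  have "(\<Sum>s<Suc m. Suc m - s) = (\<Sum>s<m. (m - s) + 1) + 1"
    by (simp add: Suc_diff_le less_imp_le_nat)
  also have "\<dots> = (\<Sum>s<m. m - s) + m + 1" unfolding sum.distrib by simp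
  finally show ?case using Suc.IH by (simp add: algebra_simps)
qed simp

lemma double_sum_staircase: "2 * (\<Sum>t\<in>{1..K+1}. K + 2 - t) = (K+1) * (K+2::nat)"
proof -
  have "(\<Sum>t\<in>{1..K+1}. K + 2 - t) = (\<Sum>s<K+1. K + 1 - s)"
    by (rule sum.reindex_bij_witness[of _ "\<lambda>s. s + 1" "\<lambda>t. t - 1"]) auto
  then show ?thesis using double_sum_countdown[of "K+1"] by simp
qed

text \<open>Below the staircase \<open>c t \<le> K + 2 - t\<close>, a drop of \<open>c\<close> right after a step \<open>i\<close> lying
  \<open>n - 2\<close> below the staircase leaves a triangular deficit of size \<open>n (n - 1) / 2 - 1\<close>.\<close>
lemma staircase_sum_bound:
  fixes c :: "nat \<Rightarrow> nat" and K n i :: nat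
  assumes n3: "3 \<le> n" and i: "1 \<le> i" and ci: "c i + i + n \<le> K + 4"
    and dec: "c (Suc i) < c i" and anti: "\<And>t. Suc i \<le> t \<Longrightarrow> c t \<le> c (Suc i)"
    and cap: "\<And>t. t \<in> {1..K+1} \<Longrightarrow> c t + t \<le> K + 2"
  shows "2 * (\<Sum>t\<in>{1..K+1}. c t) + n * (n - 1) \<le> (K+1) * (K+2) + 2"
proof -
  define e where "e t = (K + 2 - t) - c t" for t
  have "c t + e t = K + 2 - t" if "t \<in> {1..K+1}" for t
    using cap[OF that] unfolding e_def by auto
  then have "(\<Sum>t\<in>{1..K+1}. c t) + (\<Sum>t\<in>{1..K+1}. e t) = (\<Sum>t\<in>{1..K+1}. K + 2 - t)"
    unfolding sum.distrib[symmetric] by (intro sum.cong) auto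
  moreover have range: "i + n - 2 \<le> K + 1" using ci dec by linarith
  define J where "J = insert i ((\<lambda>s. i + 1 + s) ` {..<n-2})"
  have "J \<subseteq> {1..K+1}" unfolding J_def using i range n3 by auto
  then have "(\<Sum>t\<in>J. e t) \<le> (\<Sum>t\<in>{1..K+1}. e t)" by (intro sum_mono2) auto
  moreover have "(\<Sum>t\<in>J. e t) = e i + (\<Sum>s<n-2. e (i + 1 + s))"
    unfolding J_def by (subst sum.insert) (auto simp: sum.reindex inj_on_def)
  moreover have "n - 2 \<le> e i" unfolding e_def using ci by linarith
  moreover have "(\<Sum>s<n-2. n - 2 - s) \<le> (\<Sum>s<n-2. e (i + 1 + s))"
  proof (rule sum_mono)
    fix s assume "s \<in> {..<n-2}"
    have "c (i+1+s) \<le> c (Suc i)" using anti by auto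
    then show "n - 2 - s \<le> e (i+1+s)" unfolding e_def using ci dec by linarith
  qed
  moreover have "2 * (\<Sum>s<n-2. n - 2 - s) = (n-2) * (n-1)"
    using double_sum_countdown[of "n-2"] n3 by (simp add: Suc_diff_Suc numeral_2_eq_2)
  moreover have "(n-2) * (n-1) + 2 * (n-2) + 2 = n * (n - 1)"
  proof -
    obtain m where "n = m + 3" using n3 by (metis add.commute le_Suc_ex)
    then show ?thesis by (simp add: algebra_simps)
  qed
  ultimately show ?thesis using double_sum_staircase[of K] by linarith
qed

lemma card_common_inc_rank_prefix:
  assumes n2: "2 \<le> n" and r: "bij_betw r {..<n+k} {..<n+k}" and t: "t \<in> {1..n+k}"
    and C: "common_inc n k (rank_prefix (n+k) r t) \<noteq> {}"
  shows "card (common_inc n k (rank_prefix (n+k) r t)) + t \<le> k + 2"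
proof -
  have "card (rank_prefix (n+k) r t) = t" using card_rank_prefix[OF r] t by auto
  moreover from this have "rank_prefix (n+k) r t \<noteq> {}" using t by auto
  ultimately show ?thesis using card_common_inc_le[OF n2 rank_prefix_subset _ C] by auto
qed

lemma card_rank_pairs_eq_sum_head:
  assumes n2: "2 \<le> n" and r: "bij_betw r {..<n+k} {..<n+k}"
  shows "card (rank_pairs n k r) = (\<Sum>t\<in>{1..k+1}. card (common_inc n k (rank_prefix (n+k) r t)))"
proof -
  let ?c = "\<lambda>t. card (common_inc n k (rank_prefix (n+k) r t))"
  have zero: "?c t = 0" if t: "t \<in> {k+2..n+k}" for t
  proof (rule ccontr)
    assume "?c t \<noteq> 0"
    then have "common_inc n k (rank_prefix (n+k) r t) \<noteq> {}" by auto
    then have "?c t + t \<le> k + 2" using card_common_inc_rank_prefix[OF n2 r] t by auto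
    then show False using \<open>?c t \<noteq> 0\<close> t by auto
  qed
  have "card (rank_pairs n k r) = (\<Sum>t\<in>{1..n+k}. ?c t)" by (rule card_rank_pairs[OF r])
  also have "{1..n+k} = {1..k+1} \<union> {k+2..n+k}" using n2 by auto
  also have "(\<Sum>t\<in>{1..k+1} \<union> {k+2..n+k}. ?c t) = (\<Sum>t\<in>{1..k+1}. ?c t) + (\<Sum>t\<in>{k+2..n+k}. ?c t)"
    by (rule sum.union_disjoint) auto
  also have "(\<Sum>t\<in>{k+2..n+k}. ?c t) = 0" using zero by simp
  finally show ?thesis by simp
qed

text \<open>Take the last fragmented prefix \<open>i\<close>: there the number \<open>c t\<close> of common columns is \<open>n - 2\<close>
  below the staircase \<open>c t + t \<le> k + 2\<close>, and it drops right after \<open>i\<close> because the prefix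
  \<open>i + 1\<close> is no longer fragmented.\<close>
theorem fragmented_rank_pairs_bound:
  assumes n3: "3 \<le> n" and r: "bij_betw r {..<n+k} {..<n+k}"
    and ex: "\<exists>t\<in>{1..n+k}. fragmented n k (rank_prefix (n+k) r t)"
  shows "n \<le> k \<and> 2 * card (rank_pairs n k r) + n * (n - 1) \<le> (k+1) * (k+2) + 2"
proof -
  let ?N = "n+k" and ?Y = "rank_prefix (n+k) r"
  define c where "c t = card (common_inc n k (?Y t))" for t
  define B where "B = {t\<in>{1..?N}. fragmented n k (?Y t)}"
  define i where "i = Max B"
  have finB: "finite B" and "B \<noteq> {}" using ex unfolding B_def by auto
  then have iB: "i \<in> B" unfolding i_def by (rule Max_in)
  have imax: "t \<le> i" if "t \<in> B" for t unfolding i_def using finB that by simp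
  from iB have i1: "1 \<le> i" and iN: "i \<le> ?N" and ifrag: "fragmented n k (?Y i)"
    unfolding B_def by auto
  have cardY: "card (?Y i) = i" using card_rank_prefix[OF r iN] .
  then have ci: "c i + i + n \<le> k + 4" and c2: "2 \<le> c i"
    using fragmented_card_bounds[OF n3 rank_prefix_subset ifrag] unfolding c_def by auto
  have "i \<noteq> 1"
  proof
    assume "i = 1"
    then obtain x where x: "?Y i = {x}" using cardY by (metis card_1_singletonE)
    then have "x < ?N" using rank_prefix_subset[of ?N r i] by auto
    then show False using not_fragmented_singleton[OF n3] ifrag x by simp
  qed
  then have nk: "n \<le> k" using ci c2 i1 by linarith
  have "Suc i \<le> ?N" using ci c2 n3 by linarith
  then have "\<not> fragmented n k (?Y (Suc i))" using imax[of "Suc i"] unfolding B_def by auto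
  then have "common_inc n k (?Y (Suc i)) \<noteq> common_inc n k (?Y i)"
    using ifrag fragmented_cong by blast
  moreover have "common_inc n k (?Y (Suc i)) \<subseteq> common_inc n k (?Y i)"
    by (intro common_inc_antimono rank_prefix_mono) auto
  ultimately have dec: "c (Suc i) < c i"
    unfolding c_def using finite_common_inc by (intro psubset_card_mono) auto
  have anti: "c t \<le> c (Suc i)" if "Suc i \<le> t" for t
    unfolding c_def using that by (intro card_mono finite_common_inc common_inc_antimono rank_prefix_mono)
  have cap: "c t + t \<le> k + 2" if t: "t \<in> {1..k+1}" for t
  proof (cases "c t = 0")
    case False
    then have "common_inc n k (?Y t) \<noteq> {}" unfolding c_def by auto
    then show ?thesis using card_common_inc_rank_prefix[OF _ r] t n3 unfolding c_def by auto
  qed (use t in simp)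
  have "card (rank_pairs n k r) = (\<Sum>t\<in>{1..k+1}. c t)"
    unfolding c_def using card_rank_pairs_eq_sum_head[OF _ r] n3 by simp
  then show ?thesis
    using staircase_sum_bound[OF n3 i1 ci dec anti cap] nk by simp
qed

section \<open>Canonical sets are reversible\<close>

lemma Tcol_eq: "Tcol n k \<sigma> i = {b. \<forall>t\<le>i. (\<sigma> ! t, b) \<in> Inc n k}"
proof (induction i)
  case (Suc i)
  then show ?case by (auto simp: le_Suc_eq)
qed simp

lemma Tset_subset_Inc: "Tset n k \<tau> \<subseteq> Inc n k"
  unfolding Tset_def Tcol_eq by auto

text \<open>A set of pairs is reversible as soon as rows and columns can be given levels such that
  comparable pairs go up weakly and the pairs in \<open>R\<close> go down strictly: order the ground set by
  level, columns above rows of equal level.\<close>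
lemma reversible_by_levels:
  fixes f g :: "nat \<Rightarrow> nat"
  assumes fg: "\<And>i j. crown_less n k (EA i) (EB j) \<Longrightarrow> f i \<le> g j"
    and RI: "R \<subseteq> Inc n k" and Rgf: "\<And>i j. (EA i, EB j) \<in> R \<Longrightarrow> g j < f i"
  shows "reversible n k R"
proof -
  define lev where "lev x = (case x of EA i \<Rightarrow> 2 * f i | EB j \<Rightarrow> 2 * g j + 1)" for x
  define idx where "idx x = (case x of EA i \<Rightarrow> i | EB j \<Rightarrow> j)" for x
  define L where "L = {(x,y). x \<in> ground n k \<and> y \<in> ground n k \<and>
    (lev x < lev y \<or> (lev x = lev y \<and> idx x < idx y))}"
  have inj: "x = y" if "lev x = lev y" "idx x = idx y" for x y
  proof (cases x; cases y)
    fix i i' assume "x = EA i" "y = EA i'" then show ?thesis using that unfolding idx_def by simp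
  next
    fix i j assume "x = EA i" "y = EB j"
    then have "2 * f i = 2 * g j + 1" using that unfolding lev_def by simp
    then have False by presburger
    then show ?thesis ..
  next
    fix i j assume "x = EB j" "y = EA i"
    then have "2 * f i = 2 * g j + 1" using that unfolding lev_def by simp
    then have False by presburger
    then show ?thesis ..
  next
    fix j j' assume "x = EB j" "y = EB j'" then show ?thesis using that unfolding idx_def by simp
  qed
  have "linear_extension n k L"
    unfolding linear_extension_def
  proof (intro conjI allI impI ballI)
    show "L \<subseteq> ground n k \<times> ground n k" unfolding L_def by auto
    fix x show "(x,x) \<notin> L" unfolding L_def by auto
  next
    show "trans L" unfolding L_def trans_def by auto
  next
    fix x y assume xy: "x \<in> ground n k" "y \<in> ground n k" "x \<noteq> y"
    have "\<not> (lev x = lev y \<and> idx x = idx y)" using inj xy(3) by blast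
    then have "lev x < lev y \<or> (lev x = lev y \<and> idx x < idx y) \<or> lev y < lev x \<or> (lev y = lev x \<and> idx y < idx x)"
      by linarith
    then show "(x,y) \<in> L \<or> (y,x) \<in> L" unfolding L_def using xy by blast
  next
    fix x y assume c: "crown_less n k x y"
    then obtain i j where ij: "x = EA i" "y = EB j" "i < n+k" "j < n+k" by (rule crown_lessE)
    then show "(x,y) \<in> L" using fg[of i j] c unfolding L_def lev_def by auto
  qed
  moreover have "(b,a) \<in> L" if ab: "(a,b) \<in> R" for a b
  proof -
    have "(a,b) \<in> Inc n k" using ab RI by auto
    then obtain i j where ij: "a = EA i" "b = EB j" "i < n+k" "j < n+k" by (rule IncE)
    then show ?thesis using Rgf[of i j] ab unfolding L_def lev_def by auto
  qed
  ultimately show ?thesis unfolding reversible_def using RI by blast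
qed

text \<open>Rows get levels decreasing along \<open>\<tau>\<close> (and level \<open>0\<close> off \<open>\<tau>\<close>); a column is put at the
  highest level of a row below it.\<close>
lemma reversible_Tset:
  assumes dist: "distinct \<tau>"
  shows "reversible n k (Tset n k \<tau>)"
proof -
  define pos where "pos i = (LEAST t. \<tau> ! t = EA i)" for i
  have pos_eq: "pos i = t" if "t < length \<tau>" "\<tau> ! t = EA i" for i t
    unfolding pos_def
  proof (rule Least_equality)
    fix t' assume t': "\<tau> ! t' = EA i"
    show "t \<le> t'"
    proof (rule ccontr)
      assume "\<not> t \<le> t'"
      then have "t' < length \<tau>" "t' \<noteq> t" using that by auto
      then show False using dist t' that nth_eq_iff_index_eq by metis
    qed
  qed (use that in simp)
  define f where "f i = (if EA i \<in> set \<tau> then length \<tau> - pos i else 0)" for i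
  define below where "below j = insert 0 (f ` {i. i < n+k \<and> \<not> idx_incomparable n k i j})" for j
  have fin: "finite (below j)" for j unfolding below_def by auto
  show ?thesis
  proof (rule reversible_by_levels[of n k f "\<lambda>j. Max (below j)"])
    fix i j assume "crown_less n k (EA i) (EB j)"
    then show "f i \<le> Max (below j)"
      using fin unfolding crown_less_EA_EB by (intro Max_ge) (auto simp: below_def)
  next
    show "Tset n k \<tau> \<subseteq> Inc n k" by (rule Tset_subset_Inc)
  next
    fix i j assume "(EA i, EB j) \<in> Tset n k \<tau>"
    then obtain t where t: "t < length \<tau>" "\<tau> ! t = EA i" "\<forall>t'\<le>t. (\<tau> ! t', EB j) \<in> Inc n k"
      unfolding Tset_def Tcol_eq by auto
    have fi: "f i = length \<tau> - t" unfolding f_def using pos_eq[OF t(1,2)] t(1,2) nth_mem by force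
    have "f i' < f i" if i': "\<not> idx_incomparable n k i' j" for i'
    proof (cases "EA i' \<in> set \<tau>")
      case True
      then obtain t' where t': "t' < length \<tau>" "\<tau> ! t' = EA i'" by (metis in_set_conv_nth)
      have "t < t'"
      proof (rule ccontr)
        assume "\<not> t < t'"
        then have "t' \<le> t" by simp
        then have "(EA i', EB j) \<in> Inc n k" using t(3) t' by metis
        then show False using i' Inc_EA_EB by auto
      qed
      then show ?thesis using True pos_eq[OF t'] t' fi unfolding f_def by simp
    qed (use fi t(1) f_def in simp)
    then show "Max (below j) < f i"
      using fin fi t(1) unfolding below_def by (subst Max_less_iff) auto
  qed
qed

section \<open>The unfragmented case\<close>

lemma star_shaped_eq_atLeastAtMost:
  fixes D :: "nat set"
  assumes fin: "finite D" and ne: "D \<noteq> {}"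
    and star: "\<And>u u'. u \<in> D \<Longrightarrow> (g \<le> u' \<and> u' \<le> u) \<or> (u \<le> u' \<and> u' \<le> g) \<Longrightarrow> u' \<in> D"
  shows "D = {Min D..Max D}"
proof
  show "{Min D..Max D} \<subseteq> D"
  proof
    fix u' assume u': "u' \<in> {Min D..Max D}"
    have "Min D \<in> D" "Max D \<in> D" using fin ne by auto
    then show "u' \<in> D" using star u' by (cases "g \<le> u'") auto
  qed
qed (use fin in auto)

text \<open>Given a chain of intervals \<open>P t\<close> around \<open>g\<close>, enumerate \<open>{..k}\<close> by the number of
  intervals missing an element, then by the distance to \<open>g\<close>: every prefix of the enumeration is
  an interval, and every \<open>P t\<close> is a prefix.\<close>
context
  fixes k g :: nat and S :: "nat set" and P :: "nat \<Rightarrow> nat set"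
  assumes g: "g \<le> k" and finS: "finite S"
    and g_in_P: "\<And>t. t \<in> S \<Longrightarrow> g \<in> P t"
    and P_convex: "\<And>t u1 u2 u3. t \<in> S \<Longrightarrow> u1 \<le> u2 \<Longrightarrow> u2 \<le> u3 \<Longrightarrow> u1 \<in> P t \<Longrightarrow> u3 \<in> P t \<Longrightarrow> u2 \<in> P t"
    and P_chain: "\<And>t t'. t \<in> S \<Longrightarrow> t' \<in> S \<Longrightarrow> t \<le> t' \<Longrightarrow> P t \<subseteq> P t'"
begin

definition misses :: "nat \<Rightarrow> nat" where
  "misses u = card {t\<in>S. u \<notin> P t}"

definition enum_key :: "nat \<Rightarrow> nat \<times> nat \<times> bool" where
  "enum_key u = (misses u, (u - g) + (g - u), u < g)"

lemma enum_key_inj: "enum_key u = enum_key v \<Longrightarrow> u = v"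
  unfolding enum_key_def by auto

lemma misses_mono:
  assumes between: "(g \<le> u' \<and> u' \<le> u) \<or> (u \<le> u' \<and> u' \<le> g)"
  shows "misses u' \<le> misses u"
proof -
  have "{t\<in>S. u' \<notin> P t} \<subseteq> {t\<in>S. u \<notin> P t}"
  proof safe
    fix t assume t: "t \<in> S" "u' \<notin> P t" "u \<in> P t"
    from between show False
    proof
      assume "g \<le> u' \<and> u' \<le> u"
      then show False using P_convex[OF t(1) _ _ g_in_P[OF t(1)] t(3)] t(2) by blast
    next
      assume "u \<le> u' \<and> u' \<le> g"
      then show False using P_convex[OF t(1) _ _ t(3) g_in_P[OF t(1)]] t(2) by blast
    qed
  qed
  then show ?thesis unfolding misses_def using finS by (intro card_mono) auto
qed

lemma enum_key_mono:
  assumes between: "(g \<le> u' \<and> u' \<le> u) \<or> (u \<le> u' \<and> u' \<le> g)"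
  shows "enum_key u' \<le> enum_key u"
proof (cases "u' = u")
  case False
  then have "(u' - g) + (g - u') < (u - g) + (g - u)" using between by arith
  then show ?thesis using misses_mono[OF between] unfolding enum_key_def by (simp add: less_eq_prod_def)
qed simp

lemma mem_P_if_enum_key_le:
  assumes t: "t \<in> S" "u \<in> P t" and key: "enum_key u' \<le> enum_key u"
  shows "u' \<in> P t"
proof (rule ccontr)
  assume u': "u' \<notin> P t"
  have "{t\<in>S. u \<notin> P t} \<subset> {t\<in>S. u' \<notin> P t}"
  proof
    show "{t\<in>S. u \<notin> P t} \<subseteq> {t\<in>S. u' \<notin> P t}"
    proof safe
      fix t' assume t': "t' \<in> S" "u \<notin> P t'" "u' \<in> P t'"
      have "\<not> t \<le> t'" using P_chain[OF t(1) t'(1)] t(2) t'(2) by blast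
      then show False using P_chain[OF t'(1) t(1)] t'(3) u' by auto
    qed
    show "{t\<in>S. u \<notin> P t} \<noteq> {t\<in>S. u' \<notin> P t}" using t u' by blast
  qed
  then have "misses u < misses u'" unfolding misses_def using finS by (intro psubset_card_mono) auto
  then show False using key unfolding enum_key_def by (simp add: less_eq_prod_def)
qed

lemma ex_enumeration_prefix_intervals:
  "\<exists>xs. distinct xs \<and> set xs = {..k}
     \<and> (\<forall>i. \<exists>a b. set (take i xs) = {a..<b})
     \<and> (\<forall>t\<in>S. \<forall>i i'. i' \<le> i \<longrightarrow> i < length xs \<longrightarrow> xs ! i \<in> P t \<longrightarrow> xs ! i' \<in> P t)"
proof -
  define xs where "xs = sort_key enum_key [0..<k+1]"
  have set_xs: "set xs = {..k}" and len: "length xs = k+1" unfolding xs_def by auto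
  have key_mono: "enum_key (xs ! i') \<le> enum_key (xs ! i)" if "i' \<le> i" "i < length xs" for i i'
    using sorted_nth_mono[of "map enum_key xs" i' i] that unfolding xs_def by simp
  have star: "u' \<in> set (take i xs)"
    if u: "u \<in> set (take i xs)" and between: "(g \<le> u' \<and> u' \<le> u) \<or> (u \<le> u' \<and> u' \<le> g)" for i u u'
  proof -
    obtain a where a: "a < i" "a < length xs" "xs ! a = u" using u by (auto simp: in_set_conv_nth)
    have "u' \<in> set xs" using between set_xs set_take_subset[of i xs] u g by auto
    then obtain a' where a': "a' < length xs" "xs ! a' = u'" by (auto simp: in_set_conv_nth)
    show ?thesis
    proof (cases "a' < i")
      case False
      then have "enum_key u \<le> enum_key u'" using key_mono[of a a'] a a' by simp
      then have "u = u'" using enum_key_inj enum_key_mono[OF between] by (meson order_antisym)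
      then show ?thesis using u by simp
    qed (use a' in \<open>auto simp: in_set_conv_nth\<close>)
  qed
  have "\<exists>a b. set (take i xs) = {a..<b}" for i
  proof (cases "set (take i xs) = {}")
    case False
    have "set (take i xs) = {Min (set (take i xs))..Max (set (take i xs))}"
    proof (rule star_shaped_eq_atLeastAtMost[of _ g])
      fix u u' assume "u \<in> set (take i xs)" "(g \<le> u' \<and> u' \<le> u) \<or> (u \<le> u' \<and> u' \<le> g)"
      then show "u' \<in> set (take i xs)" by (rule star)
    qed (use False in auto)
    then show ?thesis by (metis atLeastLessThanSuc_atLeastAtMost)
  qed (metis atLeastLessThan_empty order_refl)
  moreover have "xs ! i' \<in> P t" if "t \<in> S" "i' \<le> i" "i < length xs" "xs ! i \<in> P t" for t i i'
    using mem_P_if_enum_key_le[OF that(1,4) key_mono[OF that(2,3)]] .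
  moreover have "distinct xs" unfolding xs_def by simp
  ultimately show ?thesis using set_xs by blast
qed

end

lemma contiguous_rotated_interval:
  assumes s: "s < n+k" and b: "b \<le> n+k"
  shows "contiguous n k ((\<lambda>u. EA ((s + u) mod (n+k))) ` {a..<b})"
proof (cases "a < b")
  case True
  define s' where "s' = (s + a) mod (n+k)"
  have shift: "(s' + t) mod (n+k) = (s + (a + t)) mod (n+k)" for t
    unfolding s'_def by (simp add: mod_add_left_eq add.assoc)
  have "(\<lambda>u. EA ((s + u) mod (n+k))) ` {a..<b} = {EA ((s' + t) mod (n+k)) | t. t < b - a}"
  proof
    show "(\<lambda>u. EA ((s + u) mod (n+k))) ` {a..<b} \<subseteq> {EA ((s' + t) mod (n+k)) | t. t < b - a}"
    proof
      fix y assume "y \<in> (\<lambda>u. EA ((s + u) mod (n+k))) ` {a..<b}"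
      then obtain u where u: "a \<le> u" "u < b" "y = EA ((s + u) mod (n+k))" by auto
      then have "y = EA ((s' + (u - a)) mod (n+k))" "u - a < b - a" unfolding shift by auto
      then show "y \<in> {EA ((s' + t) mod (n+k)) | t. t < b - a}" by blast
    qed
    show "{EA ((s' + t) mod (n+k)) | t. t < b - a} \<subseteq> (\<lambda>u. EA ((s + u) mod (n+k))) ` {a..<b}"
      unfolding shift by auto
  qed
  moreover have "s' < n+k" using s unfolding s'_def by (metis mod_less_divisor not_less0 zero_less_iff_neq_zero)
  moreover have "b - a \<le> n+k" using b by simp
  ultimately show ?thesis unfolding contiguous_def by blast
qed (simp add: contiguous_def)

text \<open>In the unfragmented case, fix a column \<open>pivot\<close> incomparable to the largest prefix that has
  common columns at all. The rows incomparable to \<open>pivot\<close> form the cyclic window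
  \<open>window_row 0, \<dots>, window_row k\<close> (ending at \<open>pivot\<close>), and every set of compatible rows is a
  part of this window; unfragmentedness makes these parts intervals of the window.\<close>
context
  fixes n k :: nat and r :: "nat \<Rightarrow> nat"
  assumes n3: "3 \<le> n" and r: "bij_betw r {..<n+k} {..<n+k}"
    and unfragmented: "\<And>t. t \<in> {1..n+k} \<Longrightarrow> \<not> fragmented n k (rank_prefix (n+k) r t)"
begin

abbreviation "Y t \<equiv> rank_prefix (n+k) r t"

definition live :: "nat set" where
  "live = {t \<in> {1..n+k}. common_inc n k (Y t) \<noteq> {}}"

definition pivot :: nat where
  "pivot = (SOME j. j \<in> common_inc n k (Y (Max live)))"

definition window_start :: nat where
  "window_start = (pivot + n) mod (n+k)"

definition window_row :: "nat \<Rightarrow> nat" where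
  "window_row u = (window_start + u) mod (n+k)"

definition window_part :: "nat \<Rightarrow> nat set" where
  "window_part t = {u. u \<le> k \<and> window_row u \<in> compatible n k (Y t)}"

lemma Y_1: "\<exists>x0. x0 < n+k \<and> Y 1 = {x0}"
proof -
  have "card (Y 1) = 1" using card_rank_prefix[OF r] n3 by auto
  then obtain x0 where "Y 1 = {x0}" by (rule card_1_singletonE)
  then show ?thesis using rank_prefix_subset[of "n+k" r 1] by auto
qed

lemma one_live: "1 \<in> live"
proof -
  obtain x0 where x0: "x0 < n+k" "Y 1 = {x0}" using Y_1 by auto
  then have "common_inc n k (Y 1) \<noteq> {}" using card_common_inc_singleton[of n x0 k] n3 by auto
  then show ?thesis unfolding live_def using n3 by auto
qed

lemma finite_live: "finite live"
  unfolding live_def by auto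

lemma pivot_common_inc: "t \<in> live \<Longrightarrow> pivot \<in> common_inc n k (Y t)"
proof -
  assume t: "t \<in> live"
  have "Max live \<in> live" using Max_in[OF finite_live] one_live by auto
  then have "\<exists>j. j \<in> common_inc n k (Y (Max live))" unfolding live_def by auto
  then have "pivot \<in> common_inc n k (Y (Max live))" unfolding pivot_def by (rule someI_ex)
  moreover have "Y t \<subseteq> Y (Max live)" using t finite_live by (intro rank_prefix_mono) simp
  ultimately show ?thesis using common_inc_antimono by blast
qed

lemma pivot_lt: "pivot < n+k"
  using pivot_common_inc[OF one_live] common_inc_subset by auto

lemma window_start_lt: "window_start < n+k"
  unfolding window_start_def using n3 by auto

lemma window_row_lt: "window_row u < n+k"
  unfolding window_row_def using n3 by auto

lemma window_row_eq: "window_row u = (pivot + (n + u)) mod (n+k)"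
  unfolding window_row_def window_start_def by (simp add: mod_add_left_eq add.assoc)

lemma window_row_inj: "u \<le> k \<Longrightarrow> v \<le> k \<Longrightarrow> window_row u = window_row v \<Longrightarrow> u = v"
  using add_mod_cancel_left[OF window_start_lt, of u v] n3 unfolding window_row_def by auto

lemma ex_window_row:
  assumes i: "i < n+k" and inc: "idx_incomparable n k i pivot"
  shows "\<exists>u\<le>k. i = window_row u"
proof -
  define d where "d = (pivot + (n+k) - i) mod (n+k)"
  have dk: "d \<le> k" using inc unfolding idx_incomparable_def d_def by auto
  have "(i + d) mod (n+k) = pivot" unfolding d_def using mod_add_cyc_dist[OF i pivot_lt] .
  then have "(pivot + ((n+k) - d)) mod (n+k) = i" using add_mod_sub_cancel[OF i, of d] dk by auto
  moreover have "(n+k) - d = n + (k - d)" using dk by auto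
  ultimately have "i = window_row (k - d)" unfolding window_row_eq by simp
  then show ?thesis by (intro exI[of _ "k-d"]) auto
qed

lemma compatible_window_row:
  assumes "t \<in> live" "i \<in> compatible n k (Y t)"
  shows "\<exists>u\<le>k. i = window_row u"
  using ex_window_row compatible_idx_incomparable[OF assms(2) pivot_common_inc[OF assms(1)]]
    assms(2) unfolding compatible_def by auto

lemma ex_common_window_part: "\<exists>g\<le>k. \<forall>t\<in>live. g \<in> window_part t"
proof -
  obtain x0 where x0: "x0 < n+k" "Y 1 = {x0}" using Y_1 by auto
  have "x0 \<in> Y t" if "t \<in> live" for t
    using x0 rank_prefix_mono[of 1 t "n+k" r] that unfolding live_def by auto
  then have x0_comp: "x0 \<in> compatible n k (Y t)" if "t \<in> live" for t
    using that subset_compatible[OF rank_prefix_subset] by blast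
  obtain g where "g \<le> k" "x0 = window_row g" using compatible_window_row[OF one_live x0_comp[OF one_live]] by auto
  then show ?thesis using x0_comp unfolding window_part_def by auto
qed

lemma window_part_mono: "t \<in> live \<Longrightarrow> t' \<in> live \<Longrightarrow> t \<le> t' \<Longrightarrow> window_part t \<subseteq> window_part t'"
  unfolding window_part_def using compatible_antimono[OF common_inc_antimono[OF rank_prefix_mono]] by blast

text \<open>A gap inside a window part would be a run of blocked rows separate from the run
  through the row just before the window, so \<open>Y t\<close> would be fragmented.\<close>
lemma window_part_convex:
  assumes t: "t \<in> live" and u: "u1 \<le> u2" "u2 \<le> u3" "u1 \<in> window_part t" "u3 \<in> window_part t"
  shows "u2 \<in> window_part t"
proof (rule ccontr)
  assume u2: "u2 \<notin> window_part t"
  let ?U = "blocked n k (Y t)"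
  have u3k: "u3 \<le> k" using u unfolding window_part_def by auto
  have in_U: "window_row v \<in> ?U \<longleftrightarrow> window_row v \<notin> compatible n k (Y t)" for v
    using window_row_lt compatible_eq by auto
  have "window_row u2 \<in> ?U" "window_row u1 \<notin> ?U" "window_row u3 \<notin> ?U"
    using u u2 u3k unfolding in_U window_part_def by auto
  moreover from this have "u1 < u2" "u2 < u3" using u by (metis le_neq_implies_less)+
  moreover have "window_row (n+k-1) \<in> ?U"
  proof -
    have "pivot + (n + (n+k-1)) = (pivot + (n-1)) + (n+k)" using n3 by simp
    then have "window_row (n+k-1) = (pivot + (n-1)) mod (n+k)"
      unfolding window_row_eq by (simp only: mod_add_self2)
    moreover have "1 \<le> n-1" using n3 by simp
    ultimately have "\<not> idx_incomparable n k (window_row (n+k-1)) pivot"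
      using not_idx_incomparable_iff[OF window_row_lt pivot_lt, of "n+k-1"] by blast
    then show ?thesis using window_row_lt pivot_common_inc[OF t] unfolding blocked_def by auto
  qed
  ultimately have "2 \<le> card (run_ends (n+k) ?U)"
    using two_run_ends[OF window_start_lt, of u1 u2 u3 ?U] finite_blocked u3k n3
    unfolding window_row_def by auto
  then show False using unfragmented t unfolding live_def fragmented_def by auto
qed

lemma rank_pairs_subset_Tset:
  assumes "distinct xs" "set xs = {..k}"
    and down: "\<And>t i i'. t \<in> live \<Longrightarrow> i' \<le> i \<Longrightarrow> i < length xs \<Longrightarrow>
      xs ! i \<in> window_part t \<Longrightarrow> xs ! i' \<in> window_part t"
  shows "rank_pairs n k r \<subseteq> Tset n k (map (\<lambda>u. EA (window_row u)) xs)"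
proof
  let ?\<tau> = "map (\<lambda>u. EA (window_row u)) xs"
  fix p assume "p \<in> rank_pairs n k r"
  then obtain x j where p: "p = (EA x, EB j)" "x < n+k" and jC: "j \<in> common_inc n k (Y (Suc (r x)))"
    unfolding rank_pairs_def by auto
  define t where "t = Suc (r x)"
  have "r x < n+k" using r p(2) unfolding bij_betw_def by auto
  then have t: "t \<in> live" unfolding live_def t_def using jC by auto
  have "x \<in> compatible n k (Y t)"
    using p(2) subset_compatible[OF rank_prefix_subset] unfolding t_def rank_prefix_def by blast
  moreover obtain u where u: "u \<le> k" "x = window_row u" using compatible_window_row[OF t] calculation by blast
  ultimately have "u \<in> window_part t" unfolding window_part_def by auto
  obtain i where i: "i < length xs" "xs ! i = u" using u assms(2) by (metis atMost_iff in_set_conv_nth)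
  have "(?\<tau> ! i', EB j) \<in> Inc n k" if "i' \<le> i" for i'
  proof -
    have "xs ! i' \<in> window_part t" using down[OF t that i(1)] \<open>u \<in> window_part t\<close> i(2) by simp
    then have "idx_incomparable n k (window_row (xs ! i')) j"
      using compatible_idx_incomparable jC unfolding window_part_def t_def by auto
    moreover have "j < n+k" using jC common_inc_subset by auto
    ultimately show ?thesis using that i(1) window_row_lt Inc_EA_EB by auto
  qed
  then have "EB j \<in> Tcol n k ?\<tau> i" unfolding Tcol_eq by auto
  moreover have "?\<tau> ! i = EA x" using i u by simp
  ultimately show "p \<in> Tset n k ?\<tau>" unfolding Tset_def p(1) using i(1) by force
qed

lemma h_contiguous_window_rows:
  assumes dist: "distinct xs" and set_xs: "set xs = {..k}"
    and intv: "\<And>i. \<exists>a b. set (take i xs) = {a..<b}"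
  shows "h_contiguous n k (map (\<lambda>u. EA (window_row u)) xs)"
  unfolding h_contiguous_def
proof (intro conjI allI impI)
  have "inj_on (\<lambda>u. EA (window_row u)) (set xs)" using window_row_inj set_xs by (auto intro: inj_onI)
  then show "distinct (map (\<lambda>u. EA (window_row u)) xs)" using dist by (simp add: distinct_map)
  show "set (map (\<lambda>u. EA (window_row u)) xs) \<subseteq> setA n k"
    using window_row_lt unfolding setA_def by auto
  fix i
  obtain a b where ab: "set (take i xs) = {a..<b}" using intv by blast
  have eq: "set (take i (map (\<lambda>u. EA (window_row u)) xs)) = (\<lambda>u. EA ((window_start + u) mod (n+k))) ` {a..<b}"
    unfolding take_map set_map ab window_row_def ..
  show "contiguous n k (set (take i (map (\<lambda>u. EA (window_row u)) xs)))"
  proof (cases "a < b")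
    case True
    then have "b - 1 \<in> set xs" using ab set_take_subset by fastforce
    then have "b \<le> n+k" using set_xs n3 by auto
    then show ?thesis unfolding eq by (rule contiguous_rotated_interval[OF window_start_lt])
  qed (simp add: eq contiguous_def)
qed

lemma ex_canonical_superset_rank_pairs:
  "\<exists>\<tau>. h_contiguous n k \<tau> \<and> length \<tau> = k+1 \<and> rank_pairs n k r \<subseteq> Tset n k \<tau>"
proof -
  obtain g where g: "g \<le> k" "\<And>t. t \<in> live \<Longrightarrow> g \<in> window_part t"
    using ex_common_window_part by auto
  obtain xs where xs: "distinct xs" "set xs = {..k}" "\<forall>i. \<exists>a b. set (take i xs) = {a..<b}"
    and down: "\<forall>t\<in>live. \<forall>i i'. i' \<le> i \<longrightarrow> i < length xs \<longrightarrow>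
      xs ! i \<in> window_part t \<longrightarrow> xs ! i' \<in> window_part t"
    using ex_enumeration_prefix_intervals[where k=k and g=g and S=live and P=window_part,
        OF g(1) finite_live g(2)] window_part_convex window_part_mono by blast
  have "length xs = k+1" using distinct_card[OF xs(1)] xs(2) by simp
  then show ?thesis
    using h_contiguous_window_rows[OF xs(1,2)] rank_pairs_subset_Tset[OF xs(1,2)] xs(3) down
    by (intro exI[of _ "map (\<lambda>u. EA (window_row u)) xs"]) auto
qed

end

theorem maximal_reversible_canonical_or_small:
  assumes n3: "3 \<le> n" and R: "maximal_reversible n k R"
  shows "canonical_reversible n k R \<or> (n \<le> k \<and> 2 * card R + n * (n - 1) \<le> (k+1) * (k+2) + 2)"
proof -
  obtain L where L: "linear_extension n k L" and RL: "R = reversed_by n k L"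
    using R by (rule maximal_reversibleE)
  define r where "r = row_rank n k L"
  have r: "bij_betw r {..<n+k} {..<n+k}" unfolding r_def by (rule bij_betw_row_rank[OF L])
  have RT: "R \<subseteq> rank_pairs n k r" unfolding RL r_def by (rule reversed_by_subset_rank_pairs[OF L])
  show ?thesis
  proof (cases "\<exists>t\<in>{1..n+k}. fragmented n k (rank_prefix (n+k) r t)")
    case True
    then show ?thesis
      using fragmented_rank_pairs_bound[OF n3 r True] card_mono[OF finite_rank_pairs RT] by auto
  next
    case False
    then have "\<not> fragmented n k (rank_prefix (n+k) r t)" if "t \<in> {1..n+k}" for t
      using that by blast
    then obtain \<tau> where \<tau>: "h_contiguous n k \<tau>" "length \<tau> = k+1" "rank_pairs n k r \<subseteq> Tset n k \<tau>"
      using ex_canonical_superset_rank_pairs[OF n3 r] by blast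
    have "distinct \<tau>" using \<tau>(1) unfolding h_contiguous_def by simp
    then have "reversible n k (Tset n k \<tau>)" by (rule reversible_Tset)
    then have "Tset n k \<tau> = R" using R RT \<tau>(3) unfolding maximal_reversible_def by blast
    then show ?thesis unfolding canonical_reversible_def using \<tau> by blast
  qed
qed

theorem theorem1p3:
  fixes n k :: nat
  assumes "n \<ge> 3"
  shows "(\<forall>S. maximal_reversible n k S \<longrightarrow> maximal_independent n k S)
       \<and> (n > k \<longrightarrow> (\<forall>S. maximal_reversible n k S \<longrightarrow> canonical_reversible n k S))
       \<and> (\<forall>S. maximal_reversible n k S \<and> \<not> canonical_reversible n k S \<longrightarrow>
             n \<le> k \<and> real (card S) \<le> real ((k+1)*(k+2)) / 2 - real (n*(n-1)) / 2 + 1)"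
proof (intro conjI allI impI)
  fix S assume "maximal_reversible n k S"
  then show "maximal_independent n k S"
    using maximal_reversible_imp_maximal_independent assms by simp
next
  fix S assume "n > k" "maximal_reversible n k S"
  then show "canonical_reversible n k S"
    using maximal_reversible_canonical_or_small[OF assms, of k S] by auto
next
  fix S assume "maximal_reversible n k S \<and> \<not> canonical_reversible n k S"
  then have bound: "n \<le> k \<and> 2 * card S + n * (n - 1) \<le> (k+1) * (k+2) + 2"
    using maximal_reversible_canonical_or_small assms by blast
  then show "n \<le> k" by simp
  from bound have "real (2 * card S + n * (n - 1)) \<le> real ((k+1) * (k+2) + 2)"
    by (simp only: of_nat_le_iff)
  then have "2 * real (card S) + real (n * (n - 1)) \<le> real ((k+1) * (k+2)) + 2" by simp
  then show "real (card S) \<le> real ((k+1)*(k+2)) / 2 - real (n*(n-1)) / 2 + 1" by linarith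
qed

end
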